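(* Let $\phi=\tilde p/p$ be an irreducible rational inner function on $\mathbb{D}^3$ of degree $(m,n,1)$, with $p(z)=p_1(z_1,z_2)+z_3p_2(z_1,z_2)$, $\tilde p(z)=z_3\tilde p_1(z_1,z_2)+\tilde p_2(z_1,z_2)$. Assume $(1,1,1)\in\mathcal{Z}_p\cap\mathbb{T}^3$ and that the vertical line $\{(1,1)\}\times\mathbb{T}$ is not contained in $\mathcal{Z}_p$. Let $\psi^0=-\tilde p_2/\tilde p_1$ and $\rho(\theta_1,\theta_2)=1-|\psi^0(e^{i\theta_1},e^{i\theta_2})|^2$, which is real analytic near $(0,0)$, with Taylor expansion $\rho(\theta_1,\theta_2)=\sum_{k,\ell\ge0}c_{k,\ell}\theta_1^k\theta_2^\ell$ at the origin. Then: (1) $c_{0,0}=c_{1,0}=c_{0,1}=0$; (2) the quadratic form $Q(\theta_1,\theta_2)=c_{2,0}\theta_1^2+c_{1,1}\theta_1\theta_2+c_{0,2}\theta_2^2$ is positive semi-definite; (3) if $Q$ is strictly positive definite, then $(1,1,1)$ is an isolated point of $\mathcal{Z}_p\cap\mathbb{T}^3$ (an isolated singularity of $\phi$ on $\mathbb{T}^3$); (4) if $Q$ is identically $0$, then $c_{3,0}=c_{2,1}=c_{1,2}=c_{0,3}=0$.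
   Context: A rational inner function (RIF) on $\mathbb{D}^3$ is a rational function holomorphic on the tridisk with unimodular radial limits a.e. on $\mathbb{T}^3$; it is written $\phi=\tilde p/p$ with $p$ zero-free on $\mathbb{D}^3$, $p,\tilde p$ without common factors, $\dim(\mathcal{Z}_p\cap\mathbb{T}^3)\le1$. For degree $(m,n,1)$, $\tilde p(z)=z_1^mz_2^nz_3\overline{p(1/\bar z_1,1/\bar z_2,1/\bar z_3)}$ and $\tilde p_j(z_1,z_2)=z_1^mz_2^n\overline{p_j(1/\bar z_1,1/\bar z_2)}$. The singular set of $\phi$ on $\mathbb{T}^3$ is $\mathcal{Z}_p\cap\mathbb{T}^3$, where $\mathcal{Z}_p$ is the zero set of $p$. *)

theory Defs
  imports "HOL-Analysis.Analysis"
begin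

text \<open>Polynomial functions on C^3 (a polynomial identity over C is the same as
  an identity of polynomial functions, since C is infinite).\<close>
definition poly3 :: "(complex \<Rightarrow> complex \<Rightarrow> complex \<Rightarrow> complex) \<Rightarrow> bool" where
  "poly3 f \<longleftrightarrow> (\<exists>(N::nat) (c::nat \<Rightarrow> nat \<Rightarrow> nat \<Rightarrow> complex). \<forall>z1 z2 z3.
      f z1 z2 z3 = (\<Sum>i\<le>N. \<Sum>j\<le>N. \<Sum>k\<le>N. c i j k * z1^i * z2^j * z3^k))"

definition const3 :: "(complex \<Rightarrow> complex \<Rightarrow> complex \<Rightarrow> complex) \<Rightarrow> bool" where
  "const3 f \<longleftrightarrow> (\<exists>c. \<forall>z1 z2 z3. f z1 z2 z3 = c)"

definition irreducible3 :: "(complex \<Rightarrow> complex \<Rightarrow> complex \<Rightarrow> complex) \<Rightarrow> bool" where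
  "irreducible3 f \<longleftrightarrow> poly3 f \<and> \<not> const3 f \<and>
     (\<forall>q r. poly3 q \<and> poly3 r \<and> (\<forall>z1 z2 z3. f z1 z2 z3 = q z1 z2 z3 * r z1 z2 z3)
        \<longrightarrow> const3 q \<or> const3 r)"

definition no_common_factor3 ::
  "(complex \<Rightarrow> complex \<Rightarrow> complex \<Rightarrow> complex) \<Rightarrow> (complex \<Rightarrow> complex \<Rightarrow> complex \<Rightarrow> complex) \<Rightarrow> bool" where
  "no_common_factor3 f g \<longleftrightarrow> \<not> (\<exists>q r s. poly3 q \<and> poly3 r \<and> poly3 s \<and> \<not> const3 q \<and>
      (\<forall>z1 z2 z3. f z1 z2 z3 = q z1 z2 z3 * r z1 z2 z3) \<and>
      (\<forall>z1 z2 z3. g z1 z2 z3 = q z1 z2 z3 * s z1 z2 z3))"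

definition pev :: "(nat \<Rightarrow> nat \<Rightarrow> nat \<Rightarrow> complex) \<Rightarrow> nat \<Rightarrow> nat \<Rightarrow> complex \<Rightarrow> complex \<Rightarrow> complex \<Rightarrow> complex" where
  "pev a m n z1 z2 z3 = (\<Sum>i\<le>m. \<Sum>j\<le>n. \<Sum>k\<le>1. a i j k * z1^i * z2^j * z3^k)"

text \<open>Reflection: ptilde(z) = z1^m z2^n z3 conj(p(1/conj z)), written as a polynomial.\<close>
definition ptev :: "(nat \<Rightarrow> nat \<Rightarrow> nat \<Rightarrow> complex) \<Rightarrow> nat \<Rightarrow> nat \<Rightarrow> complex \<Rightarrow> complex \<Rightarrow> complex \<Rightarrow> complex" where
  "ptev a m n z1 z2 z3 = (\<Sum>i\<le>m. \<Sum>j\<le>n. \<Sum>k\<le>1. cnj (a i j k) * z1^(m-i) * z2^(n-j) * z3^(1-k))"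

text \<open>p = p1 + z3 p2 ; ptilde = z3 ptilde1 + ptilde2 with ptilde_j = z1^m z2^n conj(p_j(1/conj z)).\<close>
definition p1ev :: "(nat \<Rightarrow> nat \<Rightarrow> nat \<Rightarrow> complex) \<Rightarrow> nat \<Rightarrow> nat \<Rightarrow> complex \<Rightarrow> complex \<Rightarrow> complex" where
  "p1ev a m n z1 z2 = (\<Sum>i\<le>m. \<Sum>j\<le>n. a i j 0 * z1^i * z2^j)"

definition p2ev :: "(nat \<Rightarrow> nat \<Rightarrow> nat \<Rightarrow> complex) \<Rightarrow> nat \<Rightarrow> nat \<Rightarrow> complex \<Rightarrow> complex \<Rightarrow> complex" where
  "p2ev a m n z1 z2 = (\<Sum>i\<le>m. \<Sum>j\<le>n. a i j 1 * z1^i * z2^j)"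

definition pt1ev :: "(nat \<Rightarrow> nat \<Rightarrow> nat \<Rightarrow> complex) \<Rightarrow> nat \<Rightarrow> nat \<Rightarrow> complex \<Rightarrow> complex \<Rightarrow> complex" where
  "pt1ev a m n z1 z2 = (\<Sum>i\<le>m. \<Sum>j\<le>n. cnj (a i j 0) * z1^(m-i) * z2^(n-j))"

definition pt2ev :: "(nat \<Rightarrow> nat \<Rightarrow> nat \<Rightarrow> complex) \<Rightarrow> nat \<Rightarrow> nat \<Rightarrow> complex \<Rightarrow> complex \<Rightarrow> complex" where
  "pt2ev a m n z1 z2 = (\<Sum>i\<le>m. \<Sum>j\<le>n. cnj (a i j 1) * z1^(m-i) * z2^(n-j))"

definition psi0 :: "(nat \<Rightarrow> nat \<Rightarrow> nat \<Rightarrow> complex) \<Rightarrow> nat \<Rightarrow> nat \<Rightarrow> complex \<Rightarrow> complex \<Rightarrow> complex" where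
  "psi0 a m n z1 z2 = - pt2ev a m n z1 z2 / pt1ev a m n z1 z2"

definition rho :: "(nat \<Rightarrow> nat \<Rightarrow> nat \<Rightarrow> complex) \<Rightarrow> nat \<Rightarrow> nat \<Rightarrow> real \<Rightarrow> real \<Rightarrow> real" where
  "rho a m n t1 t2 = 1 - (cmod (psi0 a m n (cis t1) (cis t2)))^2"

definition taylor2 :: "(real \<Rightarrow> real \<Rightarrow> real) \<Rightarrow> nat \<Rightarrow> nat \<Rightarrow> real" where
  "taylor2 f k l = (deriv ^^ k) (\<lambda>t1. (deriv ^^ l) (\<lambda>t2. f t1 t2) 0) 0 / (fact k * fact l)"

end

(*
  On the 2-torus rho = (|p1|^2 - |p2|^2) / |p1|^2, because |pt_j| = |p_j| there, and
  (t1, t2) |-> |p_j(e^(i t1), e^(i t2))|^2 are everywhere convergent double power series.  Since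
  p1(1, 1) /= 0, rho is a convergent double power series near the origin, and its coefficients are
  the Taylor coefficients c_kl.  Zero-freeness of p on the tridisk gives |p2| <= |p1| on the torus,
  so rho >= 0, and rho(0, 0) = 0 because p(1, 1, 1) = 0.  Along rays through the origin, the lowest
  homogeneous part of a nonnegative power series vanishing at 0 must be nonnegative: this kills the
  constant and linear parts, makes the quadratic part Q semidefinite and, when Q = 0, kills the
  cubic part, which is odd.  If Q is definite it dominates the remainder, so 0 is an isolated zero
  of rho; and a zero of p on the 3-torus has |p1| = |p2|, i.e. gives a zero of rho.
*)
theory Submission
  imports Defs
begin

section \<open>Convergent double power series\<close>

type_synonym 'a powser2 = "nat \<Rightarrow> nat \<Rightarrow> 'a"

definition powser2_term :: "'a::{real_normed_field,banach} powser2 \<Rightarrow> 'a \<Rightarrow> 'a \<Rightarrow> nat \<times> nat \<Rightarrow> 'a"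
  where "powser2_term c x y = (\<lambda>(k, l). c k l * x ^ k * y ^ l)"

definition powser2_majorant :: "'a::{real_normed_field,banach} powser2 \<Rightarrow> real \<Rightarrow> nat \<times> nat \<Rightarrow> real"
  where "powser2_majorant c r = (\<lambda>(k, l). norm (c k l) * r ^ k * r ^ l)"

definition powser2_conv :: "'a::{real_normed_field,banach} powser2 \<Rightarrow> real \<Rightarrow> bool"
  where "powser2_conv c r \<longleftrightarrow> powser2_majorant c r summable_on UNIV"

definition powser2_sum :: "'a::{real_normed_field,banach} powser2 \<Rightarrow> 'a \<Rightarrow> 'a \<Rightarrow> 'a"
  where "powser2_sum c x y = infsum (powser2_term c x y) UNIV"

definition powser2_bound :: "'a::{real_normed_field,banach} powser2 \<Rightarrow> real \<Rightarrow> real"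
  where "powser2_bound c r = infsum (powser2_majorant c r) UNIV"

lemma powser2_majorant_nonneg: "0 \<le> r \<Longrightarrow> 0 \<le> powser2_majorant c r kl"
  by (auto simp: powser2_majorant_def split: prod.splits)

lemma powser2_bound_nonneg: "0 \<le> r \<Longrightarrow> 0 \<le> powser2_bound c r"
  unfolding powser2_bound_def by (intro infsum_nonneg powser2_majorant_nonneg)

lemma norm_powser2_term_le:
  assumes "norm x \<le> r" "norm y \<le> r"
  shows "norm (powser2_term c x y kl) \<le> powser2_majorant c r kl"
proof (cases kl)
  case (Pair k l)
  have "0 \<le> r" using assms(1) norm_ge_zero order_trans by blast
  then have "norm (c k l) * norm x ^ k * norm y ^ l \<le> norm (c k l) * r ^ k * r ^ l"
    using assms by (intro mult_mono power_mono mult_nonneg_nonneg) auto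
  then show ?thesis by (simp add: Pair powser2_term_def powser2_majorant_def norm_mult norm_power)
qed

lemma powser2_conv_abs_summable:
  assumes "powser2_conv c r" "norm x \<le> r" "norm y \<le> r"
  shows "(\<lambda>kl. norm (powser2_term c x y kl)) summable_on UNIV"
  by (rule summable_on_comparison_test[where f = "powser2_majorant c r"])
     (use assms norm_powser2_term_le in \<open>auto simp: powser2_conv_def\<close>)

lemma powser2_conv_has_sum:
  assumes "powser2_conv c r" "norm x \<le> r" "norm y \<le> r"
  shows "(powser2_term c x y has_sum powser2_sum c x y) UNIV"
  using abs_summable_summable[OF powser2_conv_abs_summable[OF assms]]
  by (simp add: powser2_sum_def)

lemma powser2_conv_mono:
  assumes "powser2_conv c r" "0 \<le> r'" "r' \<le> r"
  shows "powser2_conv c r'"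
  unfolding powser2_conv_def
proof (rule summable_on_comparison_test[where f = "powser2_majorant c r"])
  show "powser2_majorant c r summable_on UNIV" using assms(1) by (simp add: powser2_conv_def)
  show "powser2_majorant c r' kl \<le> powser2_majorant c r kl" for kl
    using assms(2,3)
    by (cases kl) (simp add: powser2_majorant_def mult_mono power_mono)
qed (use assms(2) powser2_majorant_nonneg in auto)

lemma norm_powser2_sum_le:
  assumes "powser2_conv c r" "norm x \<le> r" "norm y \<le> r"
  shows "norm (powser2_sum c x y) \<le> powser2_bound c r"
  unfolding powser2_bound_def
proof (rule norm_infsum_le[OF powser2_conv_has_sum[OF assms]])
  show "(powser2_majorant c r has_sum infsum (powser2_majorant c r) UNIV) UNIV"
    using assms(1) by (simp add: powser2_conv_def)
qed (use assms norm_powser2_term_le in auto)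

lemma powser2_sum_0: "powser2_sum c 0 0 = c 0 0"
proof -
  have "(powser2_term c 0 0 has_sum c 0 0) UNIV"
    by (rule has_sum_finite_neutralI[where B = "{(0, 0)}"]) (auto simp: powser2_term_def)
  then show ?thesis unfolding powser2_sum_def by (rule infsumI)
qed

lemma powser2_conv_add:
  assumes "powser2_conv b r" "powser2_conv c r" "0 \<le> r"
  shows "powser2_conv (\<lambda>k l. b k l + c k l) r"
  unfolding powser2_conv_def
proof (rule summable_on_comparison_test)
  show "(\<lambda>kl. powser2_majorant b r kl + powser2_majorant c r kl) summable_on UNIV"
    using assms(1,2) unfolding powser2_conv_def by (rule summable_on_add)
  show "powser2_majorant (\<lambda>k l. b k l + c k l) r kl
      \<le> powser2_majorant b r kl + powser2_majorant c r kl" for kl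
  proof (cases kl)
    case (Pair k l)
    have "norm (b k l + c k l) * r ^ k * r ^ l \<le> (norm (b k l) + norm (c k l)) * r ^ k * r ^ l"
      using assms(3) by (intro mult_right_mono norm_triangle_ineq) auto
    then show ?thesis by (simp add: Pair powser2_majorant_def algebra_simps)
  qed
qed (use assms(3) powser2_majorant_nonneg in auto)

lemma powser2_sum_add:
  assumes "powser2_conv b r" "powser2_conv c r" "norm x \<le> r" "norm y \<le> r"
  shows "powser2_sum (\<lambda>k l. b k l + c k l) x y = powser2_sum b x y + powser2_sum c x y"
proof -
  have "powser2_term (\<lambda>k l. b k l + c k l) x y = (\<lambda>kl. powser2_term b x y kl + powser2_term c x y kl)"
    by (auto simp: powser2_term_def algebra_simps)
  then show ?thesis
    using has_sum_add[OF powser2_conv_has_sum[OF assms(1,3,4)] powser2_conv_has_sum[OF assms(2-4)]]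
    by (simp add: powser2_sum_def infsumI)
qed

lemma powser2_conv_scale:
  assumes "powser2_conv c r"
  shows "powser2_conv (\<lambda>k l. a * c k l) r"
proof -
  have "powser2_majorant (\<lambda>k l. a * c k l) r = (\<lambda>kl. norm a * powser2_majorant c r kl)"
    by (auto simp: powser2_majorant_def norm_mult)
  then show ?thesis using assms by (simp add: powser2_conv_def summable_on_cmult_right)
qed

lemma powser2_sum_scale:
  assumes "powser2_conv c r" "norm x \<le> r" "norm y \<le> r"
  shows "powser2_sum (\<lambda>k l. a * c k l) x y = a * powser2_sum c x y"
proof -
  have "powser2_term (\<lambda>k l. a * c k l) x y = (\<lambda>kl. a * powser2_term c x y kl)"
    by (auto simp: powser2_term_def algebra_simps)
  then show ?thesis
    using has_sum_cmult_right[OF powser2_conv_has_sum[OF assms]]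
    by (simp add: powser2_sum_def infsumI)
qed

lemma powser2_conv_sum:
  assumes "finite S" "\<And>s. s \<in> S \<Longrightarrow> powser2_conv (B s) r" "0 \<le> r"
  shows "powser2_conv (\<lambda>k l. \<Sum>s\<in>S. B s k l) r"
  using assms
proof (induction S rule: finite_induct)
  case empty
  then show ?case by (simp add: powser2_conv_def powser2_majorant_def case_prod_unfold)
next
  case (insert s S)
  then show ?case using powser2_conv_add[of "B s" r "\<lambda>k l. \<Sum>s\<in>S. B s k l"] by simp
qed

lemma powser2_sum_sum:
  assumes "finite S" "\<And>s. s \<in> S \<Longrightarrow> powser2_conv (B s) r" "norm x \<le> r" "norm y \<le> r"
  shows "powser2_sum (\<lambda>k l. \<Sum>s\<in>S. B s k l) x y = (\<Sum>s\<in>S. powser2_sum (B s) x y)"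
  using assms(1,2)
proof (induction S rule: finite_induct)
  case empty
  then show ?case by (simp add: powser2_sum_def powser2_term_def case_prod_unfold)
next
  case (insert s S)
  have "0 \<le> r" using assms(3) norm_ge_zero order_trans by blast
  with insert show ?case
    by (simp add: powser2_sum_add[OF _ powser2_conv_sum assms(3,4)])
qed

lemma has_sum_mult_abs:
  fixes f :: "'i \<Rightarrow> 'a::{real_normed_field,banach}" and g :: "'j \<Rightarrow> 'a"
  assumes f: "(\<lambda>i. norm (f i)) summable_on A" and g: "(\<lambda>j. norm (g j)) summable_on B"
  shows "((\<lambda>(i, j). f i * g j) has_sum (infsum f A * infsum g B)) (A \<times> B)"
proof -
  have "(\<lambda>p. norm ((\<lambda>(i, j). f i * g j) p)) summable_on A \<times> B"
  proof (rule summable_on_SigmaI[where g = "\<lambda>i. norm (f i) * infsum (\<lambda>j. norm (g j)) B"])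
    show "((\<lambda>j. norm ((\<lambda>(i, j). f i * g j) (i, j))) has_sum norm (f i) * infsum (\<lambda>j. norm (g j)) B) B" for i
      using has_sum_cmult_right[OF has_sum_infsum[OF g], of "norm (f i)"] by (simp add: norm_mult)
    show "(\<lambda>i. norm (f i) * infsum (\<lambda>j. norm (g j)) B) summable_on A"
      by (rule summable_on_cmult_left[OF f])
  qed auto
  then have "(\<lambda>(i, j). f i * g j) summable_on A \<times> B"
    by (rule abs_summable_summable)
  then show ?thesis
  proof (rule has_sum_SigmaI[rotated 2])
    show "((\<lambda>j. (\<lambda>(i, j). f i * g j) (i, j)) has_sum f i * infsum g B) B" for i
      using has_sum_cmult_right[OF has_sum_infsum[OF abs_summable_summable[OF g]]] by simp
    show "((\<lambda>i. f i * infsum g B) has_sum infsum f A * infsum g B) A"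
      by (rule has_sum_cmult_left[OF has_sum_infsum[OF abs_summable_summable[OF f]]])
  qed
qed

definition powser2_mult ::
    "'a::{real_normed_field,banach} powser2 \<Rightarrow> 'a powser2 \<Rightarrow> 'a powser2"
  where "powser2_mult b c K L = (\<Sum>i\<le>K. \<Sum>j\<le>L. b i j * c (K - i) (L - j))"

lemma powser2_mult_has_sum:
  assumes b: "(\<lambda>kl. norm (powser2_term b x y kl)) summable_on UNIV"
    and c: "(\<lambda>kl. norm (powser2_term c x y kl)) summable_on UNIV"
  shows "(powser2_term (powser2_mult b c) x y has_sum powser2_sum b x y * powser2_sum c x y) UNIV"
proof -
  define h :: "(nat \<times> nat) \<times> (nat \<times> nat) \<Rightarrow> (nat \<times> nat) \<times> (nat \<times> nat)"
    where "h = (\<lambda>((i, j), (i', j')). ((i + i', j + j'), (i, j)))"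
  define g where "g = (\<lambda>((K::nat, L::nat), (i, j)). b i j * c (K - i) (L - j) * x ^ K * y ^ L)"
  have "inj h" by (auto simp: h_def inj_on_def)
  have range_h: "range h = Sigma UNIV (\<lambda>(K, L). {..K} \<times> {..L})"
  proof (intro equalityI subsetI)
    fix z :: "(nat \<times> nat) \<times> (nat \<times> nat)"
    assume "z \<in> Sigma UNIV (\<lambda>(K, L). {..K} \<times> {..L})"
    then obtain K L i j where "z = ((K, L), (i, j))" "i \<le> K" "j \<le> L" by auto
    then have "z = h ((i, j), (K - i, L - j))" by (simp add: h_def)
    then show "z \<in> range h" by blast
  qed (auto simp: h_def)
  have "g \<circ> h = (\<lambda>(p, q). powser2_term b x y p * powser2_term c x y q)"
    by (auto simp: fun_eq_iff h_def g_def powser2_term_def power_add algebra_simps)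
  then have "(g has_sum powser2_sum b x y * powser2_sum c x y) (range h)"
    using has_sum_mult_abs[OF b c] by (simp add: has_sum_reindex[OF \<open>inj h\<close>] powser2_sum_def)
  then show ?thesis unfolding range_h
  proof (rule has_sum_SigmaD)
    fix KL :: "nat \<times> nat"
    obtain K L where KL: "KL = (K, L)" by fastforce
    have "(\<Sum>ij\<in>{..K} \<times> {..L}. g (KL, ij)) = powser2_term (powser2_mult b c) x y KL"
      by (simp add: sum.cartesian_product[symmetric] KL g_def powser2_term_def powser2_mult_def
          sum_distrib_right)
    then show "((\<lambda>ij. g (KL, ij)) has_sum powser2_term (powser2_mult b c) x y KL)
        ((\<lambda>(K, L). {..K} \<times> {..L}) KL)"
      by (auto simp: KL intro: has_sum_finiteI)
  qed
qed

lemma powser2_conv_mult: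
  assumes b: "powser2_conv b r" and c: "powser2_conv c r" and r: "0 \<le> r"
  shows "powser2_conv (powser2_mult b c) r"
    and "powser2_bound (powser2_mult b c) r \<le> powser2_bound b r * powser2_bound c r"
proof -
  define nb where "nb = (\<lambda>k l. norm (b k l))"
  define nc where "nc = (\<lambda>k l. norm (c k l))"
  have term_nb: "powser2_term nb r r = powser2_majorant b r"
    and term_nc: "powser2_term nc r r = powser2_majorant c r"
    by (auto simp: nb_def nc_def powser2_term_def powser2_majorant_def)
  have H: "(powser2_term (powser2_mult nb nc) r r has_sum powser2_bound b r * powser2_bound c r) UNIV"
    using powser2_mult_has_sum[of nb r r nc] b c r
    by (simp add: term_nb term_nc powser2_conv_def powser2_bound_def powser2_sum_def
        powser2_majorant_nonneg)
  moreover have le: "powser2_majorant (powser2_mult b c) r kl \<le> powser2_term (powser2_mult nb nc) r r kl"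
    for kl
  proof (cases kl)
    case (Pair K L)
    have "norm (powser2_mult b c K L) \<le> powser2_mult nb nc K L"
      unfolding powser2_mult_def nb_def nc_def
      by (rule order_trans[OF norm_sum sum_mono], rule order_trans[OF norm_sum sum_mono])
         (simp add: norm_mult)
    then show ?thesis using r by (simp add: Pair powser2_majorant_def powser2_term_def mult_right_mono)
  qed
  ultimately show conv: "powser2_conv (powser2_mult b c) r"
    unfolding powser2_conv_def
    by (intro summable_on_comparison_test[OF has_sum_imp_summable] powser2_majorant_nonneg r)
  show "powser2_bound (powser2_mult b c) r \<le> powser2_bound b r * powser2_bound c r"
    using has_sum_mono[OF has_sum_infsum[OF conv[unfolded powser2_conv_def]] H le]
    by (simp add: powser2_bound_def)
qed

lemma powser2_sum_mult:
  assumes "powser2_conv b r" "powser2_conv c r" "norm x \<le> r" "norm y \<le> r"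
  shows "powser2_sum (powser2_mult b c) x y = powser2_sum b x y * powser2_sum c x y"
  using powser2_mult_has_sum[OF powser2_conv_abs_summable[OF assms(1,3,4)]
      powser2_conv_abs_summable[OF assms(2-4)]]
  by (simp add: powser2_sum_def infsumI)

definition powser2_const :: "'a::{real_normed_field,banach} \<Rightarrow> 'a powser2"
  where "powser2_const a k l = (if k = 0 \<and> l = 0 then a else 0)"

lemma powser2_const:
  shows "powser2_conv (powser2_const a) r" and "powser2_bound (powser2_const a) r = norm a"
    and "powser2_sum (powser2_const a) x y = a"
proof -
  have "(powser2_majorant (powser2_const a) r has_sum norm a) UNIV"
    by (rule has_sum_finite_neutralI[where B = "{(0, 0)}"])
       (auto simp: powser2_majorant_def powser2_const_def split: if_splits)
  moreover have "(powser2_term (powser2_const a) x y has_sum a) UNIV"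
    by (rule has_sum_finite_neutralI[where B = "{(0, 0)}"])
       (auto simp: powser2_term_def powser2_const_def split: if_splits)
  ultimately show "powser2_conv (powser2_const a) r" "powser2_bound (powser2_const a) r = norm a"
    "powser2_sum (powser2_const a) x y = a"
    by (auto simp: powser2_conv_def powser2_bound_def powser2_sum_def intro: has_sum_imp_summable infsumI)
qed

primrec powser2_pow :: "'a::{real_normed_field,banach} powser2 \<Rightarrow> nat \<Rightarrow> 'a powser2"
  where
    "powser2_pow u 0 = powser2_const 1"
  | "powser2_pow u (Suc j) = powser2_mult u (powser2_pow u j)"

lemma powser2_conv_pow:
  assumes u: "powser2_conv u r" and r: "0 \<le> r"
  shows "powser2_conv (powser2_pow u j) r"
    and "powser2_bound (powser2_pow u j) r \<le> powser2_bound u r ^ j"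
    and "norm x \<le> r \<Longrightarrow> norm y \<le> r \<Longrightarrow> powser2_sum (powser2_pow u j) x y = powser2_sum u x y ^ j"
proof (induction j)
  case 0
  show "powser2_conv (powser2_pow u 0) r" "powser2_bound (powser2_pow u 0) r \<le> powser2_bound u r ^ 0"
    "powser2_sum (powser2_pow u 0) x y = powser2_sum u x y ^ 0"
    by (simp_all add: powser2_const)
next
  case (Suc j)
  show "powser2_conv (powser2_pow u (Suc j)) r"
    using powser2_conv_mult(1)[OF u Suc.IH(1) r] by simp
  have "powser2_bound (powser2_pow u (Suc j)) r \<le> powser2_bound u r * powser2_bound (powser2_pow u j) r"
    using powser2_conv_mult(2)[OF u Suc.IH(1) r] by simp
  also have "\<dots> \<le> powser2_bound u r ^ Suc j"
    using mult_left_mono[OF Suc.IH(2) powser2_bound_nonneg[OF r]] by simp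
  finally show "powser2_bound (powser2_pow u (Suc j)) r \<le> powser2_bound u r ^ Suc j" .
  show "powser2_sum (powser2_pow u (Suc j)) x y = powser2_sum u x y ^ Suc j"
    if "norm x \<le> r" "norm y \<le> r"
    using powser2_sum_mult[OF u Suc.IH(1) that] Suc.IH(3)[OF that] by simp
qed

lemma powser2_infsum_coeff_summable:
  fixes b :: "nat \<Rightarrow> 'a::{real_normed_field,banach} powser2"
  assumes sm: "(\<lambda>(j, kl). powser2_majorant (b j) r kl) summable_on UNIV \<times> UNIV" and r: "0 < r"
  shows "(\<lambda>j. norm (b j k l)) summable_on UNIV"
proof -
  have "(\<lambda>(kl, j). powser2_majorant (b j) r kl) summable_on UNIV \<times> UNIV"
    using sm summable_on_swap by fastforce
  then have "(\<lambda>j. powser2_majorant (b j) r (k, l)) summable_on UNIV"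
    using summable_on_SigmaD1[of "\<lambda>kl j. powser2_majorant (b j) r kl" UNIV "\<lambda>_. UNIV" "(k, l)"]
    by simp
  then have "(\<lambda>j. powser2_majorant (b j) r (k, l) / (r ^ k * r ^ l)) summable_on UNIV"
    unfolding divide_inverse by (rule summable_on_cmult_left)
  then show ?thesis using r by (simp add: powser2_majorant_def)
qed

lemma powser2_conv_infsum:
  fixes b :: "nat \<Rightarrow> 'a::{real_normed_field,banach} powser2"
  assumes sm: "(\<lambda>(j, kl). powser2_majorant (b j) r kl) summable_on UNIV \<times> UNIV" and r: "0 < r"
  shows "powser2_conv (\<lambda>k l. \<Sum>\<^sub>\<infinity>j. b j k l) r"
proof -
  note coeff = powser2_infsum_coeff_summable[OF sm r]
  have le: "powser2_majorant (\<lambda>k l. \<Sum>\<^sub>\<infinity>j. b j k l) r kl \<le> (\<Sum>\<^sub>\<infinity>j. powser2_majorant (b j) r kl)" for kl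
  proof (cases kl)
    case (Pair k l)
    have "norm (\<Sum>\<^sub>\<infinity>j. b j k l) \<le> (\<Sum>\<^sub>\<infinity>j. norm (b j k l))"
      using abs_summable_summable[OF coeff[of k l]] coeff[of k l]
      by (intro norm_infsum_le[OF has_sum_infsum has_sum_infsum]) auto
    then have "norm (\<Sum>\<^sub>\<infinity>j. b j k l) * r ^ k * r ^ l \<le> (\<Sum>\<^sub>\<infinity>j. norm (b j k l)) * r ^ k * r ^ l"
      using r by (intro mult_right_mono) auto
    also have "\<dots> = (\<Sum>\<^sub>\<infinity>j. norm (b j k l) * r ^ k * r ^ l)"
      by (simp add: infsum_cmult_left' mult.assoc)
    finally show ?thesis by (simp add: Pair powser2_majorant_def)
  qed
  moreover have "(\<lambda>kl. \<Sum>\<^sub>\<infinity>j. powser2_majorant (b j) r kl) summable_on UNIV"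
  proof -
    have "(\<lambda>(kl, j). powser2_majorant (b j) r kl) summable_on UNIV \<times> UNIV"
      using sm summable_on_swap by fastforce
    moreover have "(\<lambda>j. powser2_majorant (b j) r kl) summable_on UNIV" for kl
      using summable_on_cmult_left[OF coeff[of "fst kl" "snd kl"]]
      by (cases kl) (simp add: powser2_majorant_def mult.assoc)
    ultimately show ?thesis
      using summable_on_SigmaD[of "\<lambda>(kl, j). powser2_majorant (b j) r kl" UNIV "\<lambda>_. UNIV"] by simp
  qed
  ultimately show ?thesis
    unfolding powser2_conv_def
    by (intro summable_on_comparison_test[OF _ le]) (use r in \<open>simp_all add: powser2_majorant_nonneg\<close>)
qed

lemma powser2_sum_infsum:
  fixes b :: "nat \<Rightarrow> 'a::{real_normed_field,banach} powser2"
  assumes sm: "(\<lambda>(j, kl). powser2_majorant (b j) r kl) summable_on UNIV \<times> UNIV" and r: "0 < r"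
    and x: "norm x \<le> r" and y: "norm y \<le> r"
  shows "((\<lambda>j. powser2_sum (b j) x y) has_sum powser2_sum (\<lambda>k l. \<Sum>\<^sub>\<infinity>j. b j k l) x y) UNIV"
proof -
  define Phi where "Phi = (\<lambda>(j, kl). powser2_term (b j) x y kl)"
  have "(\<lambda>p. norm (Phi p)) summable_on UNIV \<times> UNIV"
    by (rule summable_on_comparison_test[OF sm])
       (auto simp: Phi_def intro: norm_powser2_term_le[OF x y])
  then have "Phi summable_on UNIV \<times> UNIV" by (rule abs_summable_summable)
  then have Phi: "(Phi has_sum infsum Phi UNIV) (UNIV \<times> UNIV)" by simp
  have "((\<lambda>j. powser2_sum (b j) x y) has_sum infsum Phi UNIV) UNIV"
  proof (rule has_sum_SigmaD[OF Phi])
    fix j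
    have "powser2_conv (b j) r"
      using summable_on_SigmaD1[OF sm[unfolded UNIV_Times_UNIV[symmetric]], of j]
      by (simp add: powser2_conv_def)
    then show "((\<lambda>kl. Phi (j, kl)) has_sum powser2_sum (b j) x y) UNIV"
      using powser2_conv_has_sum[OF _ x y] by (simp add: Phi_def)
  qed
  moreover have "(powser2_term (\<lambda>k l. \<Sum>\<^sub>\<infinity>j. b j k l) x y has_sum infsum Phi UNIV) UNIV"
  proof (rule has_sum_SigmaD[OF Phi[unfolded has_sum_swap[of Phi]]])
    fix kl :: "nat \<times> nat"
    obtain k l where kl: "kl = (k, l)" by fastforce
    have "((\<lambda>j. b j k l * x ^ k * y ^ l) has_sum (\<Sum>\<^sub>\<infinity>j. b j k l) * x ^ k * y ^ l) UNIV"
      using abs_summable_summable[OF powser2_infsum_coeff_summable[OF sm r]]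
      by (intro has_sum_cmult_left has_sum_infsum)
    then show "((\<lambda>j. (\<lambda>(kl, j). Phi (j, kl)) (kl, j)) has_sum
        powser2_term (\<lambda>k l. \<Sum>\<^sub>\<infinity>j. b j k l) x y kl) UNIV"
      by (simp add: kl Phi_def powser2_term_def)
  qed
  ultimately show ?thesis by (simp add: powser2_sum_def infsumI)
qed

definition powser2_geometric :: "'a::{real_normed_field,banach} powser2 \<Rightarrow> 'a powser2"
  where "powser2_geometric u k l = (\<Sum>\<^sub>\<infinity>j. powser2_pow u j k l)"

lemma powser2_geometric:
  assumes u: "powser2_conv u r" and r: "0 < r" and M: "powser2_bound u r < 1"
  shows "powser2_conv (powser2_geometric u) r"
    and "norm x \<le> r \<Longrightarrow> norm y \<le> r \<Longrightarrow>
      powser2_sum (powser2_geometric u) x y = 1 / (1 - powser2_sum u x y)"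
proof -
  have M0: "0 \<le> powser2_bound u r" using r by (simp add: powser2_bound_nonneg)
  have "(\<lambda>j. powser2_bound u r ^ j) summable_on UNIV"
    using M M0 by (intro summable_nonneg_imp_summable_on summable_geometric) auto
  then have bounds: "(\<lambda>j. powser2_bound (powser2_pow u j) r) summable_on UNIV"
    by (rule summable_on_comparison_test)
       (use powser2_conv_pow(2)[OF u] r powser2_bound_nonneg[of r] in auto)
  have sm: "(\<lambda>(j, kl). powser2_majorant (powser2_pow u j) r kl) summable_on UNIV \<times> UNIV"
    by (rule summable_on_SigmaI[OF _ bounds])
       (use powser2_conv_pow(1)[OF u] r powser2_majorant_nonneg[of r]
         in \<open>auto simp: powser2_conv_def powser2_bound_def\<close>)
  show "powser2_conv (powser2_geometric u) r"
    using powser2_conv_infsum[OF sm r] by (simp add: powser2_geometric_def[abs_def])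
  assume x: "norm x \<le> r" and y: "norm y \<le> r"
  have s: "norm (powser2_sum u x y) < 1"
    using norm_powser2_sum_le[OF u x y] M by simp
  have "((\<lambda>j. powser2_sum u x y ^ j) has_sum 1 / (1 - powser2_sum u x y)) UNIV"
    by (rule norm_summable_imp_has_sum[OF _ geometric_sums[OF s]])
       (use summable_geometric[of "norm (powser2_sum u x y)"] s in \<open>simp add: norm_power\<close>)
  moreover have "((\<lambda>j. powser2_sum u x y ^ j) has_sum powser2_sum (powser2_geometric u) x y) UNIV"
    using powser2_sum_infsum[OF sm r x y] powser2_conv_pow(3)[OF u _ x y] r
    by (simp add: powser2_geometric_def[abs_def])
  ultimately show "powser2_sum (powser2_geometric u) x y = 1 / (1 - powser2_sum u x y)"
    using has_sum_unique by blast
qed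

lemma powser2_bound_shrink:
  assumes u: "powser2_conv u R" and R: "0 < R" and r: "0 \<le> r" "r \<le> R" and u0: "u 0 0 = 0"
  shows "powser2_bound u r \<le> r / R * powser2_bound u R"
proof -
  define q where "q = r / R"
  have q: "0 \<le> q" "q \<le> 1" using r R by (auto simp: q_def divide_le_eq)
  have "powser2_majorant u r kl \<le> q * powser2_majorant u R kl" for kl
  proof (cases kl)
    case (Pair k l)
    show ?thesis
    proof (cases "k = 0 \<and> l = 0")
      case False
      have "r ^ k * r ^ l = q ^ (k + l) * (R ^ k * R ^ l)"
        using R by (simp add: q_def power_add power_divide)
      also have "\<dots> \<le> q * (R ^ k * R ^ l)"
        using power_decreasing[of 1 "k + l" q] False q R by (intro mult_right_mono) auto
      finally have "r ^ k * r ^ l * norm (u k l) \<le> q * (R ^ k * R ^ l) * norm (u k l)"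
        by (rule mult_right_mono) simp
      then show ?thesis by (simp add: Pair powser2_majorant_def mult_ac)
    qed (simp add: Pair u0 powser2_majorant_def)
  qed
  then show ?thesis
    unfolding powser2_bound_def q_def[symmetric]
    using u powser2_conv_mono[OF u r]
    by (intro has_sum_mono[OF has_sum_infsum has_sum_cmult_right[OF has_sum_infsum]])
       (auto simp: powser2_conv_def)
qed

definition powser2_inverse :: "'a::{real_normed_field,banach} powser2 \<Rightarrow> 'a powser2"
  where "powser2_inverse d k l =
    inverse (d 0 0) * powser2_geometric (\<lambda>k l. if k = 0 \<and> l = 0 then 0 else - d k l / d 0 0) k l"

lemma powser2_inverse:
  assumes d: "powser2_conv d R" and R: "0 < R" and d0: "d 0 0 \<noteq> 0"
  obtains r where "0 < r" "r \<le> R" "powser2_conv (powser2_inverse d) r"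
    and "\<And>x y. norm x \<le> r \<Longrightarrow> norm y \<le> r \<Longrightarrow>
      powser2_sum d x y \<noteq> 0 \<and> powser2_sum (powser2_inverse d) x y = inverse (powser2_sum d x y)"
proof -
  \<comment> \<open>d = d 0 0 * (1 - u) with u 0 0 = 0, and 1 / (1 - u) is a geometric series once u is small.\<close>
  define u where "u = (\<lambda>k l. if k = 0 \<and> l = 0 then 0 else - d k l / d 0 0)"
  have uR: "powser2_conv u R"
    unfolding powser2_conv_def
  proof (rule summable_on_comparison_test)
    show "(\<lambda>kl. inverse (norm (d 0 0)) * powser2_majorant d R kl) summable_on UNIV"
      using d unfolding powser2_conv_def by (rule summable_on_cmult_right)
    show "powser2_majorant u R kl \<le> inverse (norm (d 0 0)) * powser2_majorant d R kl" for kl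
      using R d0 by (cases kl)
        (auto simp: u_def powser2_majorant_def norm_divide norm_mult norm_inverse divide_inverse mult_ac)
  qed (use R in \<open>simp add: powser2_majorant_nonneg\<close>)
  define M where "M = powser2_bound u R"
  have M: "0 \<le> M" using R by (simp add: M_def powser2_bound_nonneg)
  define r where "r = R / (M + 2)"
  have r: "0 < r" "r \<le> R" using R M by (auto simp: r_def divide_le_eq)
  have u: "powser2_conv u r" using powser2_conv_mono[OF uR] r by simp
  have "powser2_bound u r \<le> r / R * M"
    using powser2_bound_shrink[OF uR R _ r(2)] r by (simp add: M_def u_def)
  also have "r / R * M < 1"
    using R M by (simp add: r_def divide_less_eq)
  finally have small: "powser2_bound u r < 1" .
  note geom = powser2_geometric[OF u r(1) small]
  have "powser2_conv (powser2_inverse d) r"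
    using powser2_conv_scale[OF geom(1)] by (simp add: powser2_inverse_def[abs_def] u_def)
  moreover have "powser2_sum d x y \<noteq> 0 \<and> powser2_sum (powser2_inverse d) x y = inverse (powser2_sum d x y)"
    if x: "norm x \<le> r" and y: "norm y \<le> r" for x y
  proof -
    have "powser2_sum d x y = powser2_sum (\<lambda>k l. powser2_const (d 0 0) k l + (- d 0 0) * u k l) x y"
      using d0 by (intro arg_cong[where f = "\<lambda>c. powser2_sum c x y"])
        (auto simp: fun_eq_iff powser2_const_def u_def)
    also have "\<dots> = powser2_sum (powser2_const (d 0 0)) x y + powser2_sum (\<lambda>k l. (- d 0 0) * u k l) x y"
      by (rule powser2_sum_add[OF powser2_const(1) powser2_conv_scale[OF u] x y])
    also have "\<dots> = d 0 0 * (1 - powser2_sum u x y)"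
      by (simp only: powser2_const(3) powser2_sum_scale[OF u x y]) (simp add: algebra_simps)
    finally have "powser2_sum d x y = d 0 0 * (1 - powser2_sum u x y)" .
    moreover have "powser2_sum u x y \<noteq> 1"
      using norm_powser2_sum_le[OF u x y] small by auto
    moreover have "powser2_sum (powser2_inverse d) x y = inverse (d 0 0) * (1 / (1 - powser2_sum u x y))"
      using powser2_sum_scale[OF geom(1) x y] geom(2)[OF x y]
      by (simp add: powser2_inverse_def[abs_def] u_def)
    ultimately show ?thesis using d0 by (simp add: divide_inverse)
  qed
  ultimately show ?thesis using that r by blast
qed

lemma powser2_tensor:
  fixes g h :: "nat \<Rightarrow> 'a::{real_normed_field,banach}"
  assumes g: "summable (\<lambda>k. norm (g k) * r ^ k)" and h: "summable (\<lambda>l. norm (h l) * r ^ l)"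
    and r: "0 \<le> r"
  shows "powser2_conv (\<lambda>k l. g k * h l) r"
    and "norm x \<le> r \<Longrightarrow> norm y \<le> r \<Longrightarrow>
      powser2_sum (\<lambda>k l. g k * h l) x y = (\<Sum>k. g k * x ^ k) * (\<Sum>l. h l * y ^ l)"
proof -
  have abs_summable: "(\<lambda>k. norm (g k * z ^ k)) summable_on UNIV"
    if g: "summable (\<lambda>k. norm (g k) * r ^ k)" and z: "norm z \<le> r" for g :: "nat \<Rightarrow> 'a" and z
  proof -
    have "summable (\<lambda>k. norm (g k * z ^ k))"
      by (rule summable_comparison_test'[OF g])
         (use z in \<open>auto simp: norm_mult norm_power intro!: mult_left_mono power_mono\<close>)
    then show ?thesis by (simp add: summable_on_UNIV_nonneg_real_iff)
  qed
  have sum_eq: "infsum (\<lambda>k. g k * z ^ k) UNIV = (\<Sum>k. g k * z ^ k)"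
    if g: "summable (\<lambda>k. norm (g k) * r ^ k)" and z: "norm z \<le> r" for g :: "nat \<Rightarrow> 'a" and z
  proof -
    have "summable (\<lambda>k. norm (g k * z ^ k))"
      using abs_summable[OF g z] by (simp add: summable_on_UNIV_nonneg_real_iff)
    from norm_summable_imp_has_sum[OF this summable_sums[OF summable_norm_cancel[OF this]]]
    show ?thesis by (rule infsumI)
  qed
  have term_eq: "powser2_term (\<lambda>k l. g k * h l) x y = (\<lambda>(k, l). (g k * x ^ k) * (h l * y ^ l))" for x y
    by (auto simp: powser2_term_def mult_ac)
  have real_abs_summable: "(\<lambda>k. norm (norm (g k) * r ^ k)) summable_on UNIV"
    if "summable (\<lambda>k. norm (g k) * r ^ k)" for g :: "nat \<Rightarrow> 'a"
    using that r by (simp add: summable_on_UNIV_nonneg_real_iff)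
  have "powser2_majorant (\<lambda>k l. g k * h l) r = (\<lambda>(k, l). (norm (g k) * r ^ k) * (norm (h l) * r ^ l))"
    by (auto simp: powser2_majorant_def norm_mult mult_ac)
  then show "powser2_conv (\<lambda>k l. g k * h l) r"
    using has_sum_imp_summable[OF has_sum_mult_abs[OF real_abs_summable[OF g] real_abs_summable[OF h]]]
    by (simp add: powser2_conv_def)
  assume x: "norm x \<le> r" and y: "norm y \<le> r"
  show "powser2_sum (\<lambda>k l. g k * h l) x y = (\<Sum>k. g k * x ^ k) * (\<Sum>l. h l * y ^ l)"
    using has_sum_mult_abs[OF abs_summable[OF g x] abs_summable[OF h y]]
    by (simp add: powser2_sum_def term_eq infsumI sum_eq[OF g x] sum_eq[OF h y])
qed

lemma powser2_conv_Re:
  assumes c: "powser2_conv c r" and r: "0 \<le> r"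
  shows "powser2_conv (\<lambda>k l. Re (c k l)) r"
  unfolding powser2_conv_def
proof (rule summable_on_comparison_test[OF c[unfolded powser2_conv_def]])
  show "powser2_majorant (\<lambda>k l. Re (c k l)) r kl \<le> powser2_majorant c r kl" for kl
    using r by (cases kl) (simp add: powser2_majorant_def abs_Re_le_cmod mult_right_mono)
qed (use r in \<open>simp add: powser2_majorant_nonneg\<close>)

lemma powser2_sum_Re:
  assumes c: "powser2_conv c r" and x: "\<bar>x\<bar> \<le> r" and y: "\<bar>y\<bar> \<le> r"
  shows "powser2_sum (\<lambda>k l. Re (c k l)) x y = Re (powser2_sum c (of_real x) (of_real y))"
proof -
  have "powser2_term (\<lambda>k l. Re (c k l)) x y = (\<lambda>kl. Re (powser2_term c (of_real x) (of_real y) kl))"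
    by (auto simp: powser2_term_def mult.assoc simp flip: of_real_power)
  then show ?thesis
    using has_sum_Re[OF powser2_conv_has_sum[OF c]] x y by (simp add: powser2_sum_def infsumI)
qed

section \<open>Taylor coefficients\<close>

lemma higher_deriv_eval_fps_0:
  fixes f :: "'a::{banach,real_normed_field} fps"
  assumes "fps_conv_radius f > 0"
  shows "(deriv ^^ n) (eval_fps f) 0 = fact n * fps_nth f n"
  using assms
proof (induction n arbitrary: f)
  case 0
  then show ?case by (simp add: eval_fps_at_0)
next
  case (Suc n)
  have "eventually (\<lambda>z::'a. z \<in> eball 0 (fps_conv_radius f)) (nhds 0)"
    using Suc.prems by (intro eventually_nhds_in_open) (auto simp: zero_ereal_def)
  then have "eventually (\<lambda>z. deriv (eval_fps f) z = eval_fps (fps_deriv f) z) (nhds 0)"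
    by eventually_elim (simp add: eval_fps_deriv)
  then have "(deriv ^^ Suc n) (eval_fps f) 0 = (deriv ^^ n) (eval_fps (fps_deriv f)) 0"
    unfolding funpow_Suc_right o_def by (intro higher_deriv_cong_ev refl)
  also have "\<dots> = fact n * fps_nth (fps_deriv f) n"
    using Suc.prems fps_conv_radius_deriv[of f] by (intro Suc.IH) auto
  also have "\<dots> = fact (Suc n) * fps_nth f (Suc n)"
    by (simp add: fps_deriv_def algebra_simps)
  finally show ?case .
qed

lemma powser2_row_summable:
  assumes C: "powser2_conv C r" and r: "0 < r" and x: "norm x \<le> r"
  shows "summable (\<lambda>k. norm (C k l * x ^ k))"
proof -
  have "(\<lambda>(l, k). powser2_majorant C r (k, l)) summable_on UNIV \<times> UNIV"
    using C summable_on_swap[of "powser2_majorant C r" UNIV UNIV] by (simp add: powser2_conv_def)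
  then have "(\<lambda>k. powser2_majorant C r (k, l) * inverse (r ^ l)) summable_on UNIV"
    using summable_on_SigmaD1[of "\<lambda>l k. powser2_majorant C r (k, l)" UNIV "\<lambda>_. UNIV" l]
    by (intro summable_on_cmult_left) (simp add: case_prod_unfold)
  then have "summable (\<lambda>k. norm (C k l) * r ^ k)"
    using r by (simp add: powser2_majorant_def summable_on_UNIV_nonneg_real_iff mult.assoc)
  then show ?thesis
    by (rule summable_comparison_test')
       (use x in \<open>auto simp: norm_mult norm_power intro!: mult_left_mono power_mono\<close>)
qed

lemma powser2_sum_by_rows:
  assumes C: "powser2_conv C r" and r: "0 < r" and x: "norm x \<le> r" and y: "norm y \<le> r"
  shows "(\<lambda>l. (\<Sum>k. C k l * x ^ k) * y ^ l) sums powser2_sum C x y"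
proof -
  have "(powser2_term C x y has_sum powser2_sum C x y) (UNIV \<times> UNIV)"
    using powser2_conv_has_sum[OF C x y] by simp
  from has_sum_swap[THEN iffD1, OF this]
  have "((\<lambda>l. (\<Sum>k. C k l * x ^ k) * y ^ l) has_sum powser2_sum C x y) UNIV"
  proof (rule has_sum_SigmaD)
    fix l
    note row = powser2_row_summable[OF C r x, of l]
    have "((\<lambda>k. C k l * x ^ k) has_sum (\<Sum>k. C k l * x ^ k)) UNIV"
      by (rule norm_summable_imp_has_sum[OF row summable_sums[OF summable_norm_cancel[OF row]]])
    from has_sum_cmult_left[OF this, of "y ^ l"]
    show "((\<lambda>k. (\<lambda>(l, k). powser2_term C x y (k, l)) (l, k)) has_sum (\<Sum>k. C k l * x ^ k) * y ^ l) UNIV"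
      by (simp add: powser2_term_def)
  qed
  then show ?thesis by (rule has_sum_imp_sums)
qed

lemma taylor2_powser2_sum:
  fixes C :: "real powser2" and f :: "real \<Rightarrow> real \<Rightarrow> real"
  assumes C: "powser2_conv C r" and r: "0 < r"
    and f: "\<And>x y. \<bar>x\<bar> < r \<Longrightarrow> \<bar>y\<bar> < r \<Longrightarrow> f x y = powser2_sum C x y"
  shows "taylor2 f k l = C k l"
proof -
  \<comment> \<open>Differentiate l times in y through the power series in y whose coefficients are the rows,
    then k times in x through the l-th row.\<close>
  define row where "row l = Abs_fps (\<lambda>k. C k l)" for l
  define col where "col x = Abs_fps (\<lambda>l. eval_fps (row l) x)" for x
  have col_sums: "(\<lambda>l. eval_fps (row l) x * y ^ l) sums powser2_sum C x y"
    if "\<bar>x\<bar> \<le> r" "\<bar>y\<bar> \<le> r" for x y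
    using powser2_sum_by_rows[OF C r] that by (simp add: row_def eval_fps_def)
  have radius_row: "ereal r \<le> fps_conv_radius (row l)" for l
    using conv_radius_geI[of "\<lambda>k. C k l" r] summable_norm_cancel[OF powser2_row_summable[OF C r, of r l]] r
    by (simp add: fps_conv_radius_def row_def)
  have radius_col: "ereal r \<le> fps_conv_radius (col x)" if "\<bar>x\<bar> \<le> r" for x
    using conv_radius_geI[of "\<lambda>l. eval_fps (row l) x" r] col_sums[OF that, of r] r
    by (auto simp: fps_conv_radius_def col_def sums_iff)
  have radius_gt: "ereal \<bar>x\<bar> < fps_conv_radius (row l)" "ereal \<bar>x\<bar> < fps_conv_radius (col x)"
    if "\<bar>x\<bar> < r" for x l
    using radius_row[of l] radius_col[of x] that by (auto intro: less_le_trans[of _ "ereal r"])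
  have near_0: "eventually (\<lambda>t. \<bar>t\<bar> < r) (nhds (0::real))"
    using eventually_nhds_in_open[of "{-r<..<r}" 0] r
    by (simp add: eventually_mono abs_less_iff)
  have inner: "(deriv ^^ l) (\<lambda>y. f x y) 0 = eval_fps (fps_const (fact l) * row l) x"
    if x: "\<bar>x\<bar> < r" for x
  proof -
    have "eventually (\<lambda>y. f x y = eval_fps (col x) y) (nhds 0)"
      using near_0
      by eventually_elim (use x col_sums in \<open>auto simp: f col_def eval_fps_def sums_iff\<close>)
    then have "(deriv ^^ l) (\<lambda>y. f x y) 0 = (deriv ^^ l) (eval_fps (col x)) 0"
      by (intro higher_deriv_cong_ev refl)
    also have "\<dots> = fact l * eval_fps (row l) x"
      using le_less_trans[OF _ radius_gt(2)[OF x]]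
      by (simp add: higher_deriv_eval_fps_0 col_def zero_ereal_def)
    finally show ?thesis
      using radius_gt[OF x] by (simp add: eval_fps_mult)
  qed
  have "eventually (\<lambda>x. (deriv ^^ l) (\<lambda>y. f x y) 0 = eval_fps (fps_const (fact l) * row l) x) (nhds 0)"
    using near_0 by eventually_elim (simp add: inner)
  then have "(deriv ^^ k) (\<lambda>x. (deriv ^^ l) (\<lambda>y. f x y) 0) 0
      = (deriv ^^ k) (eval_fps (fps_const (fact l) * row l)) 0"
    by (intro higher_deriv_cong_ev refl)
  also have "\<dots> = fact k * (fact l * C k l)"
  proof -
    have "0 < fps_conv_radius (fps_const (fact l) * row l)"
      using radius_gt(1)[of 0 l] r fps_conv_radius_mult[of "fps_const (fact l)" "row l"]
      by (simp add: zero_ereal_def)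
    then show ?thesis by (simp add: higher_deriv_eval_fps_0 row_def)
  qed
  finally show ?thesis by (simp add: taylor2_def)
qed

section \<open>Nonnegative power series vanishing at the origin\<close>

lemma powser2_remainder_bound:
  assumes C: "powser2_conv C s" and s: "0 < s"
    and x: "norm x \<le> \<tau>" and y: "norm y \<le> \<tau>" and \<tau>: "\<tau> \<le> s"
  shows "norm (powser2_sum C x y - sum (powser2_term C x y) {(k, l). k + l < N})
    \<le> powser2_bound C s * (\<tau> / s) ^ N"
proof -
  define T where "T = {(k::nat, l::nat). k + l < N}"
  define q where "q = \<tau> / s"
  have "0 \<le> \<tau>" using x norm_ge_zero order_trans by blast
  then have q: "0 \<le> q" "q \<le> 1" using \<tau> s by (auto simp: q_def)
  have "finite T" by (rule finite_subset[of _ "{..N} \<times> {..N}"]) (auto simp: T_def)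
  have xy: "norm x \<le> s" "norm y \<le> s" using x y \<tau> by auto
  have tail: "(powser2_term C x y has_sum (powser2_sum C x y - sum (powser2_term C x y) T)) (UNIV - T)"
    using has_sum_Diff[OF powser2_conv_has_sum[OF C xy] has_sum_finiteI[OF \<open>finite T\<close>]] by simp
  have majorant: "((\<lambda>kl. powser2_majorant C s kl * q ^ N) has_sum powser2_bound C s * q ^ N) UNIV"
    using has_sum_cmult_left[OF has_sum_infsum[OF C[unfolded powser2_conv_def]]]
    by (simp add: powser2_bound_def)
  then have "(\<lambda>kl. powser2_majorant C s kl * q ^ N) summable_on (UNIV - T)"
    by (rule summable_on_subset[OF has_sum_imp_summable]) simp
  then have majorant_tail: "((\<lambda>kl. powser2_majorant C s kl * q ^ N) has_sum
      infsum (\<lambda>kl. powser2_majorant C s kl * q ^ N) (UNIV - T)) (UNIV - T)"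
    by simp
  have "norm (powser2_term C x y kl) \<le> powser2_majorant C s kl * q ^ N" if "kl \<in> UNIV - T" for kl
  proof (cases kl)
    case (Pair k l)
    have N: "N \<le> k + l" using that by (auto simp: Pair T_def)
    have "\<tau> ^ k * \<tau> ^ l = (s ^ k * s ^ l) * q ^ (k + l)"
      using s by (simp add: q_def power_add power_divide)
    also have "\<dots> \<le> (s ^ k * s ^ l) * q ^ N"
      using s by (intro mult_left_mono power_decreasing[OF N q]) auto
    finally have "norm (C k l) * (\<tau> ^ k * \<tau> ^ l) \<le> norm (C k l) * ((s ^ k * s ^ l) * q ^ N)"
      by (rule mult_left_mono) simp
    moreover have "norm (powser2_term C x y kl) \<le> norm (C k l) * (\<tau> ^ k * \<tau> ^ l)"
      using x y \<open>0 \<le> \<tau>\<close>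
      by (auto simp: Pair powser2_term_def norm_mult norm_power mult.assoc
          intro!: mult_left_mono mult_mono power_mono)
    ultimately show ?thesis
      by (simp add: Pair powser2_majorant_def mult_ac)
  qed
  then have "norm (powser2_sum C x y - sum (powser2_term C x y) T)
      \<le> infsum (\<lambda>kl. powser2_majorant C s kl * q ^ N) (UNIV - T)"
    by (rule norm_infsum_le[OF tail majorant_tail])
  also have "\<dots> \<le> powser2_bound C s * q ^ N"
    using s q by (intro has_sum_mono2[OF majorant_tail majorant])
      (auto intro!: mult_nonneg_nonneg powser2_majorant_nonneg)
  finally show ?thesis by (simp add: T_def q_def)
qed

definition powser2_form :: "'a::comm_semiring_1 powser2 \<Rightarrow> nat \<Rightarrow> 'a \<Rightarrow> 'a \<Rightarrow> 'a"
  where "powser2_form C d x y = (\<Sum>k\<le>d. C k (d - k) * x ^ k * y ^ (d - k))"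

lemma sum_powser2_term_eq_form:
  assumes low: "\<And>k l. k + l < d \<Longrightarrow> C k l = 0"
  shows "sum (powser2_term C x y) {(k, l). k + l < Suc d} = powser2_form C d x y"
proof -
  have "finite {(k, l). k + l < Suc d}"
    by (rule finite_subset[of _ "{..d} \<times> {..d}"]) auto
  moreover have "(\<lambda>k. (k, d - k)) ` {..d} \<subseteq> {(k, l). k + l < Suc d}" by auto
  moreover have "powser2_term C x y kl = 0"
    if "kl \<in> {(k, l). k + l < Suc d} - (\<lambda>k. (k, d - k)) ` {..d}" for kl
  proof (cases kl)
    case (Pair k l)
    with that have "k + l < d" by (auto simp: image_iff)
    then show ?thesis by (simp add: Pair powser2_term_def low)
  qed
  ultimately have "sum (powser2_term C x y) {(k, l). k + l < Suc d}
      = sum (powser2_term C x y) ((\<lambda>k. (k, d - k)) ` {..d})"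
    by (intro sum.mono_neutral_right) auto
  also have "\<dots> = powser2_form C d x y"
    by (subst sum.reindex) (auto simp: inj_on_def powser2_form_def powser2_term_def)
  finally show ?thesis .
qed

lemma powser2_form_scale: "powser2_form C d (h * x) (h * y) = h ^ d * powser2_form C d x y"
proof -
  have "C k (d - k) * (h * x) ^ k * (h * y) ^ (d - k) = h ^ d * (C k (d - k) * x ^ k * y ^ (d - k))"
    if "k \<le> d" for k
  proof -
    have "C k (d - k) * (h * x) ^ k * (h * y) ^ (d - k)
        = (h ^ k * h ^ (d - k)) * (C k (d - k) * x ^ k * y ^ (d - k))"
      by (simp add: power_mult_distrib mult_ac)
    also have "h ^ k * h ^ (d - k) = h ^ d" using that by (simp flip: power_add)
    finally show ?thesis .
  qed
  then show ?thesis by (simp add: powser2_form_def sum_distrib_left)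
qed

lemma powser2_form_explicit:
  shows "powser2_form C 0 x y = C 0 0"
    and "powser2_form C 1 x y = C 0 1 * y + C 1 0 * x"
    and "powser2_form C 2 x y = C 2 0 * x ^ 2 + C 1 1 * x * y + C 0 2 * y ^ 2"
    and "powser2_form C 3 x y = C 3 0 * x ^ 3 + C 2 1 * x ^ 2 * y + C 1 2 * x * y ^ 2 + C 0 3 * y ^ 3"
  by (simp_all add: powser2_form_def numeral_2_eq_2 numeral_3_eq_3 algebra_simps)

lemma powser2_form_uminus:
  fixes C :: "'a::comm_ring_1 powser2"
  assumes "odd d"
  shows "powser2_form C d (- x) (- y) = - powser2_form C d x y"
  using powser2_form_scale[of C d "-1" x y] assms by simp

lemma quadratic_form_coercive:
  fixes a b c :: real
  assumes pd: "\<And>x y. (x, y) \<noteq> (0, 0) \<Longrightarrow> 0 < a * x ^ 2 + b * x * y + c * y ^ 2"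
  obtains \<mu> where "0 < \<mu>" "\<And>x y. \<mu> * (x ^ 2 + y ^ 2) \<le> a * x ^ 2 + b * x * y + c * y ^ 2"
proof -
  have a: "0 < a" using pd[of 1 0] by simp
  have c: "0 < c" using pd[of 0 1] by simp
  have "0 < a * (- b) ^ 2 + b * (- b) * (2 * a) + c * (2 * a) ^ 2" using pd[of "- b" "2 * a"] a by simp
  also have "\<dots> = a * (4 * a * c - b ^ 2)" by (simp add: power2_eq_square algebra_simps)
  finally have D: "0 < 4 * a * c - b ^ 2" using a by (simp add: zero_less_mult_iff)
  define \<mu> where "\<mu> = (4 * a * c - b ^ 2) / (4 * (a + c))"
  have \<mu>: "0 < \<mu>" using D a c by (simp add: \<mu>_def)
  have \<mu>_eq: "\<mu> * (4 * (a + c)) = 4 * a * c - b ^ 2" using a c by (simp add: \<mu>_def)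
  define A where "A = a - \<mu>"
  define B where "B = c - \<mu>"
  have "0 < 4 * a ^ 2 + b ^ 2" using a by (simp add: add_pos_nonneg)
  then have "4 * a * c - b ^ 2 < a * (4 * (a + c))" by (simp add: algebra_simps power2_eq_square)
  then have "\<mu> * (4 * (a + c)) < a * (4 * (a + c))" using \<mu>_eq by simp
  then have A: "0 < A" using a c unfolding A_def by (simp add: mult_less_cancel_right)
  \<comment> \<open>(a - \<mu>) x^2 + b x y + (c - \<mu>) y^2 is still semidefinite: 4 (a - \<mu>) (c - \<mu>) - b^2 = 4 \<mu>^2.\<close>
  have key: "4 * A * B - b ^ 2 = 4 * \<mu> ^ 2"
    using \<mu>_eq unfolding A_def B_def by (simp add: power2_eq_square algebra_simps)
  have "\<mu> * (x ^ 2 + y ^ 2) \<le> a * x ^ 2 + b * x * y + c * y ^ 2" for x y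
  proof -
    have "4 * A * (A * x ^ 2 + b * x * y + B * y ^ 2) = (2 * A * x + b * y) ^ 2 + (4 * A * B - b ^ 2) * y ^ 2"
      by (simp add: power2_eq_square algebra_simps)
    also have "\<dots> \<ge> 0" unfolding key by simp
    finally have "0 \<le> A * x ^ 2 + b * x * y + B * y ^ 2" using A by (simp add: zero_le_mult_iff)
    then show ?thesis unfolding A_def B_def by (simp add: algebra_simps)
  qed
  with \<mu> that show ?thesis by blast
qed

locale nonneg_powser2 =
  fixes C :: "real powser2" and r :: real
  assumes conv: "powser2_conv C r" and radius_pos: "0 < r"
    and nonneg: "\<And>x y. \<bar>x\<bar> < r \<Longrightarrow> \<bar>y\<bar> < r \<Longrightarrow> 0 \<le> powser2_sum C x y"
    and vanishes_at_0: "powser2_sum C 0 0 = 0"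
begin

lemma form_nonneg:
  assumes low: "\<And>k l. k + l < d \<Longrightarrow> C k l = 0"
  shows "0 \<le> powser2_form C d x y"
proof -
  define s where "s = r / 2"
  have s: "0 < s" "s < r" using radius_pos by (auto simp: s_def)
  have Cs: "powser2_conv C s" using powser2_conv_mono[OF conv] s by simp
  define c where "c = \<bar>x\<bar> + \<bar>y\<bar> + 1"
  have c: "1 \<le> c" "\<bar>x\<bar> \<le> c" "\<bar>y\<bar> \<le> c" by (auto simp: c_def)
  define K where "K = powser2_bound C s * (c / s) ^ Suc d"
  \<comment> \<open>Along the ray through (x, y) the sum is h^d times the form, up to an error O(h^(d+1)).\<close>
  have ray: "- K * h \<le> powser2_form C d x y" if h: "0 < h" "h \<le> s / c" for h
  proof -
    have hc: "h * c \<le> s" using h c by (simp add: field_simps)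
    have hx: "\<bar>h * x\<bar> \<le> h * c" "\<bar>h * y\<bar> \<le> h * c"
      using h c by (simp_all add: abs_mult mult_left_mono)
    have "\<bar>powser2_sum C (h * x) (h * y) - h ^ d * powser2_form C d x y\<bar>
        \<le> powser2_bound C s * (h * c / s) ^ Suc d"
      using powser2_remainder_bound[OF Cs s(1) _ _ hc, of "h * x" "h * y" "Suc d"] hx
      by (simp add: sum_powser2_term_eq_form low powser2_form_scale)
    also have "\<dots> = K * h ^ Suc d"
      unfolding K_def by (simp add: power_mult_distrib power_divide mult_ac)
    finally have "\<bar>powser2_sum C (h * x) (h * y) - h ^ d * powser2_form C d x y\<bar> \<le> K * h ^ Suc d" .
    moreover have "0 \<le> powser2_sum C (h * x) (h * y)"
      using hx hc s by (intro nonneg) auto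
    ultimately have "h ^ d * (- K * h) \<le> h ^ d * powser2_form C d x y"
      by (simp add: algebra_simps)
    then show ?thesis using h by (simp only: mult_le_cancel_left_pos[OF zero_less_power[OF h(1)]])
  qed
  have "eventually (\<lambda>h. h \<in> {0<..<s / c}) (at_right 0)"
    using s c by (intro eventually_at_right_real) simp
  then have "eventually (\<lambda>h. - K * h \<le> powser2_form C d x y) (at_right 0)"
    by eventually_elim (rule ray; simp)
  moreover have "((\<lambda>h. - K * h) \<longlongrightarrow> - K * 0) (at_right 0)"
    by (intro tendsto_mult tendsto_const tendsto_ident_at)
  ultimately show ?thesis
    using tendsto_upperbound[of "\<lambda>h. - K * h" 0 "at_right 0"] by simp
qed

lemma form_eq_0_if_odd:
  assumes "odd d" and "\<And>k l. k + l < d \<Longrightarrow> C k l = 0"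
  shows "powser2_form C d x y = 0"
proof -
  have "0 \<le> powser2_form C d x y" "0 \<le> powser2_form C d (- x) (- y)"
    by (intro form_nonneg assms(2); assumption)+
  then show ?thesis using powser2_form_uminus[OF assms(1), of C x y] by linarith
qed

lemma coeffs_deg_le_1_eq_0: "C 0 0 = 0" "C 1 0 = 0" "C 0 1 = 0"
proof -
  show C00: "C 0 0 = 0" using vanishes_at_0 by (simp add: powser2_sum_0)
  have "powser2_form C 1 x y = 0" for x y
    using C00 by (intro form_eq_0_if_odd) auto
  from this[of 1 0] this[of 0 1] show "C 1 0 = 0" "C 0 1 = 0"
    unfolding powser2_form_explicit by simp_all
qed

lemma coeff_eq_0_if_deg_lt_2: "k + l < 2 \<Longrightarrow> C k l = 0"
proof -
  assume "k + l < 2"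
  then have "k = 0 \<and> l = 0 \<or> k = 1 \<and> l = 0 \<or> k = 0 \<and> l = 1" by arith
  then show ?thesis using coeffs_deg_le_1_eq_0 by auto
qed

lemma quadratic_form_nonneg: "0 \<le> C 2 0 * x ^ 2 + C 1 1 * x * y + C 0 2 * y ^ 2"
  using form_nonneg[of 2 x y] coeff_eq_0_if_deg_lt_2 unfolding powser2_form_explicit by blast

lemma cubic_coeffs_eq_0:
  assumes "\<And>x y. C 2 0 * x ^ 2 + C 1 1 * x * y + C 0 2 * y ^ 2 = 0"
  shows "C 3 0 = 0" "C 2 1 = 0" "C 1 2 = 0" "C 0 3 = 0"
proof -
  have "C 2 0 = 0" "C 0 2 = 0" using assms[of 1 0] assms[of 0 1] by simp_all
  moreover have "C 1 1 = 0" using assms[of 1 1] calculation by simp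
  ultimately have "C k l = 0" if "k + l < 3" for k l
  proof (cases "k + l < 2")
    case False
    with that have "k = 2 \<and> l = 0 \<or> k = 1 \<and> l = 1 \<or> k = 0 \<and> l = 2" by arith
    with \<open>C 2 0 = 0\<close> \<open>C 0 2 = 0\<close> \<open>C 1 1 = 0\<close> show ?thesis by auto
  qed (rule coeff_eq_0_if_deg_lt_2)
  then have "powser2_form C 3 x y = 0" for x y
    by (intro form_eq_0_if_odd) auto
  from this[of 1 0] this[of 0 1] this[of 1 1] this[of 1 "-1"]
  show "C 3 0 = 0" "C 2 1 = 0" "C 1 2 = 0" "C 0 3 = 0"
    unfolding powser2_form_explicit by simp_all
qed

lemma isolated_zero:
  assumes pd: "\<And>x y. (x, y) \<noteq> (0, 0) \<Longrightarrow> 0 < C 2 0 * x ^ 2 + C 1 1 * x * y + C 0 2 * y ^ 2"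
  shows "\<exists>\<delta>>0. \<forall>x y. \<bar>x\<bar> < \<delta> \<longrightarrow> \<bar>y\<bar> < \<delta> \<longrightarrow> powser2_sum C x y = 0 \<longrightarrow> x = 0 \<and> y = 0"
proof -
  define Q where "Q x y = C 2 0 * x ^ 2 + C 1 1 * x * y + C 0 2 * y ^ 2" for x y
  obtain \<mu> where \<mu>: "0 < \<mu>" "\<And>x y. \<mu> * (x ^ 2 + y ^ 2) \<le> Q x y"
    using quadratic_form_coercive[OF pd] unfolding Q_def by blast
  define s where "s = r / 2"
  have s: "0 < s" "s < r" using radius_pos by (auto simp: s_def)
  have Cs: "powser2_conv C s" using powser2_conv_mono[OF conv] s by simp
  define M where "M = powser2_bound C s"
  have M: "0 \<le> M" using s by (simp add: M_def powser2_bound_nonneg)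
  \<comment> \<open>For max |x| |y| = \<tau> < \<delta> the remainder M (\<tau> / s)^3 is smaller than \<mu> \<tau>^2.\<close>
  define \<delta> where "\<delta> = min s (\<mu> * s ^ 3 / (M + 1))"
  have "x = 0 \<and> y = 0" if x: "\<bar>x\<bar> < \<delta>" and y: "\<bar>y\<bar> < \<delta>" and zero: "powser2_sum C x y = 0" for x y
  proof (rule ccontr)
    assume "\<not> (x = 0 \<and> y = 0)"
    define \<tau> where "\<tau> = max \<bar>x\<bar> \<bar>y\<bar>"
    have \<tau>: "0 < \<tau>" "\<tau> \<le> s" "\<tau> < \<mu> * s ^ 3 / (M + 1)"
      using \<open>\<not> (x = 0 \<and> y = 0)\<close> x y by (auto simp: \<tau>_def \<delta>_def)
    have "sum (powser2_term C x y) {(k, l). k + l < Suc 2} = Q x y"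
      using sum_powser2_term_eq_form[of 2 C x y] coeff_eq_0_if_deg_lt_2
      by (simp add: Q_def powser2_form_explicit)
    then have "\<bar>powser2_sum C x y - Q x y\<bar> \<le> M * (\<tau> / s) ^ 3"
      using powser2_remainder_bound[OF Cs s(1) _ _ \<tau>(2), of x y "Suc 2"]
      by (simp add: \<tau>_def M_def)
    also have "\<dots> = (M * \<tau> / s ^ 3) * \<tau> ^ 2"
      by (simp add: power_divide power2_eq_square power3_eq_cube)
    finally have "Q x y \<le> (M * \<tau> / s ^ 3) * \<tau> ^ 2" using zero by simp
    moreover have "\<tau> ^ 2 \<le> x ^ 2 + y ^ 2"
      by (cases "\<bar>x\<bar> \<le> \<bar>y\<bar>") (auto simp: \<tau>_def max_def power2_eq_square abs_mult_self_eq)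
    then have "\<mu> * \<tau> ^ 2 \<le> Q x y"
      using \<mu> by (meson mult_left_mono less_imp_le order_trans)
    ultimately have "\<mu> * \<tau> ^ 2 \<le> (M * \<tau> / s ^ 3) * \<tau> ^ 2" by linarith
    then have "\<mu> \<le> M * \<tau> / s ^ 3"
      using mult_le_cancel_right_pos[of "\<tau> ^ 2" \<mu> "M * \<tau> / s ^ 3"] \<tau>(1) by simp
    moreover have "(M + 1) * \<tau> < \<mu> * s ^ 3"
      using \<tau>(3) M by (simp add: pos_less_divide_eq mult.commute)
    then have "M * \<tau> < \<mu> * s ^ 3" using \<tau>(1) by (simp add: algebra_simps)
    then have "M * \<tau> / s ^ 3 < \<mu>" using s by (simp add: divide_less_eq)
    ultimately show False by simp
  qed
  moreover have "0 < \<delta>" using s \<mu> M by (simp add: \<delta>_def)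
  ultimately show ?thesis by blast
qed

end

section \<open>Rational inner functions of degree (m, n, 1)\<close>

definition exp_i_coeff :: "real \<Rightarrow> nat \<Rightarrow> complex"
  where "exp_i_coeff a k = (\<i> * of_real a) ^ k /\<^sub>R fact k"

lemma summable_exp_i_coeff: "summable (\<lambda>k. norm (exp_i_coeff a k) * r ^ k)"
proof -
  have "norm (exp_i_coeff a k) * r ^ k = (\<bar>a\<bar> * r) ^ k /\<^sub>R fact k" for k
    by (simp add: exp_i_coeff_def norm_mult norm_power power_mult_distrib divide_inverse mult_ac)
  then show ?thesis using summable_exp_generic[of "\<bar>a\<bar> * r"] by simp
qed

lemma suminf_exp_i_coeff: "(\<Sum>k. exp_i_coeff a k * x ^ k) = exp (\<i> * of_real a * x)"
  by (simp add: exp_def exp_i_coeff_def scaleR_conv_of_real power_mult_distrib mult_ac)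

definition trig_poly_coeffs :: "(nat \<Rightarrow> nat \<Rightarrow> complex) \<Rightarrow> real \<Rightarrow> nat \<Rightarrow> nat \<Rightarrow> complex powser2"
  where "trig_poly_coeffs \<alpha> \<sigma> m n k l =
    (\<Sum>i\<le>m. \<Sum>j\<le>n. \<alpha> i j * (exp_i_coeff (\<sigma> * i) k * exp_i_coeff (\<sigma> * j) l))"

lemma powser2_conv_trig_poly_coeffs: "0 \<le> r \<Longrightarrow> powser2_conv (trig_poly_coeffs \<alpha> \<sigma> m n) r"
  unfolding trig_poly_coeffs_def
  by (intro powser2_conv_sum powser2_conv_scale powser2_tensor(1) summable_exp_i_coeff) auto

lemma powser2_sum_trig_poly_coeffs:
  "powser2_sum (trig_poly_coeffs \<alpha> \<sigma> m n) (of_real t1) (of_real t2) =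
    (\<Sum>i\<le>m. \<Sum>j\<le>n. \<alpha> i j * cis (\<sigma> * i * t1) * cis (\<sigma> * j * t2))"
proof -
  define r where "r = max \<bar>t1\<bar> \<bar>t2\<bar>"
  have r: "0 \<le> r" and nt: "norm (of_real t1 :: complex) \<le> r" "norm (of_real t2 :: complex) \<le> r"
    by (simp_all add: r_def)
  note tensor = powser2_tensor[OF summable_exp_i_coeff summable_exp_i_coeff r]
  have "powser2_sum (\<lambda>k l. exp_i_coeff (\<sigma> * i) k * exp_i_coeff (\<sigma> * j) l) (of_real t1) (of_real t2)
      = cis (\<sigma> * i * t1) * cis (\<sigma> * j * t2)" for i j :: nat
    by (simp only: tensor(2)[OF nt] suminf_exp_i_coeff) (simp add: cis_conv_exp mult_ac)
  then show ?thesis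
    unfolding trig_poly_coeffs_def
    by (simp add: powser2_sum_sum[OF _ _ nt] powser2_sum_scale[OF _ nt] powser2_conv_sum
        powser2_conv_scale tensor(1) r mult.assoc)
qed

lemma powser2_sum_trig_poly_coeffs_cis:
  shows "powser2_sum (trig_poly_coeffs \<alpha> 1 m n) (of_real t1) (of_real t2) =
      (\<Sum>i\<le>m. \<Sum>j\<le>n. \<alpha> i j * cis t1 ^ i * cis t2 ^ j)"
    and "powser2_sum (trig_poly_coeffs (\<lambda>i j. cnj (\<alpha> i j)) (- 1) m n) (of_real t1) (of_real t2) =
      cnj (\<Sum>i\<le>m. \<Sum>j\<le>n. \<alpha> i j * cis t1 ^ i * cis t2 ^ j)"
  by (simp_all add: powser2_sum_trig_poly_coeffs Complex.DeMoivre cis_cnj)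

definition trig_poly_sq_coeffs :: "(nat \<Rightarrow> nat \<Rightarrow> complex) \<Rightarrow> nat \<Rightarrow> nat \<Rightarrow> complex powser2"
  where "trig_poly_sq_coeffs \<alpha> m n =
    powser2_mult (trig_poly_coeffs \<alpha> 1 m n) (trig_poly_coeffs (\<lambda>i j. cnj (\<alpha> i j)) (- 1) m n)"

lemma powser2_conv_trig_poly_sq_coeffs: "0 \<le> r \<Longrightarrow> powser2_conv (trig_poly_sq_coeffs \<alpha> m n) r"
  unfolding trig_poly_sq_coeffs_def by (intro powser2_conv_mult powser2_conv_trig_poly_coeffs)

lemma powser2_sum_trig_poly_sq_coeffs:
  "powser2_sum (trig_poly_sq_coeffs \<alpha> m n) (of_real x) (of_real y) =
    of_real ((cmod (\<Sum>i\<le>m. \<Sum>j\<le>n. \<alpha> i j * cis x ^ i * cis y ^ j))\<^sup>2)"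
proof -
  have bound: "0 \<le> max \<bar>x\<bar> \<bar>y\<bar>" "norm (of_real x :: complex) \<le> max \<bar>x\<bar> \<bar>y\<bar>"
    "norm (of_real y :: complex) \<le> max \<bar>x\<bar> \<bar>y\<bar>" by auto
  note conv = powser2_conv_trig_poly_coeffs[OF bound(1)]
  have "powser2_sum (trig_poly_sq_coeffs \<alpha> m n) (of_real x) (of_real y) =
      powser2_sum (trig_poly_coeffs \<alpha> 1 m n) (of_real x) (of_real y) *
      powser2_sum (trig_poly_coeffs (\<lambda>i j. cnj (\<alpha> i j)) (- 1) m n) (of_real x) (of_real y)"
    unfolding trig_poly_sq_coeffs_def by (rule powser2_sum_mult[OF conv conv bound(2,3)])
  then show ?thesis by (simp only: powser2_sum_trig_poly_coeffs_cis complex_norm_square)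
qed

lemma pev_eq_p1ev_p2ev: "pev a m n z1 z2 z3 = p1ev a m n z1 z2 + z3 * p2ev a m n z1 z2"
  by (simp add: pev_def p1ev_def p2ev_def atMost_Suc sum.distrib sum_distrib_left algebra_simps)

lemma pt_ev_on_torus:
  assumes z1: "cmod z1 = 1" and z2: "cmod z2 = 1"
  shows "pt1ev a m n z1 z2 = z1 ^ m * z2 ^ n * cnj (p1ev a m n z1 z2)"
    and "pt2ev a m n z1 z2 = z1 ^ m * z2 ^ n * cnj (p2ev a m n z1 z2)"
proof -
  have unimodular: "z ^ m * cnj z ^ i = z ^ (m - i)" if "cmod z = 1" "i \<le> m" for z :: complex and i m
  proof -
    have "z ^ m * cnj z ^ i = z ^ (m - i) * (z * cnj z) ^ i"
      using that(2) by (simp add: power_mult_distrib mult_ac flip: power_add)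
    then show ?thesis using that(1) complex_norm_square[of z] by simp
  qed
  have monomial: "cnj c * z1 ^ (m - i) * z2 ^ (n - j) = z1 ^ m * z2 ^ n * (cnj c * cnj z1 ^ i * cnj z2 ^ j)"
    if "i \<le> m" "j \<le> n" for c i j
    using unimodular[OF z1 that(1)] unimodular[OF z2 that(2)] by (simp add: mult_ac)
  show "pt1ev a m n z1 z2 = z1 ^ m * z2 ^ n * cnj (p1ev a m n z1 z2)"
    and "pt2ev a m n z1 z2 = z1 ^ m * z2 ^ n * cnj (p2ev a m n z1 z2)"
    by (simp_all add: pt1ev_def pt2ev_def p1ev_def p2ev_def sum_distrib_left monomial)
qed

lemma rho_eq: "rho a m n x y = 1 - (cmod (p2ev a m n (cis x) (cis y)))\<^sup>2 / (cmod (p1ev a m n (cis x) (cis y)))\<^sup>2"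
  by (simp add: rho_def psi0_def norm_divide norm_mult norm_power pt_ev_on_torus power_divide)

lemma norm_p2ev_le_norm_p1ev:
  assumes zero_free: "\<And>z1 z2 z3. cmod z1 < 1 \<Longrightarrow> cmod z2 < 1 \<Longrightarrow> cmod z3 < 1 \<Longrightarrow> pev a m n z1 z2 z3 \<noteq> 0"
    and z1: "cmod z1 = 1" and z2: "cmod z2 = 1"
  shows "cmod (p2ev a m n z1 z2) \<le> cmod (p1ev a m n z1 z2)"
proof (rule ccontr)
  \<comment> \<open>Otherwise |p2| > |p1| persists at some (t z1, t z2) with t < 1, and z3 = - p1 / p2 is a zero of p in the tridisk.\<close>
  define g where "g t = cmod (p2ev a m n (of_real t * z1) (of_real t * z2))
    - cmod (p1ev a m n (of_real t * z1) (of_real t * z2))" for t :: real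
  assume "\<not> ?thesis"
  then have "0 < g 1" by (simp add: g_def)
  moreover have "isCont g 1" unfolding g_def p1ev_def p2ev_def by (intro continuous_intros)
  ultimately have "eventually (\<lambda>t. 0 < g t) (at_left 1)"
    by (metis filterlim_at_split isCont_def order_tendstoD(1))
  moreover have "eventually (\<lambda>t. t \<in> {0<..<1}) (at_left (1::real))"
    by (rule eventually_at_left_real) simp
  ultimately obtain t where "0 < g t" "t \<in> {0<..<1}"
    using eventually_happens[OF eventually_conj] by fastforce
  define w1 where "w1 = of_real t * z1"
  define w2 where "w2 = of_real t * z2"
  have w: "cmod w1 < 1" "cmod w2 < 1"
    using \<open>t \<in> {0<..<1}\<close> z1 z2 by (auto simp: w1_def w2_def norm_mult)
  have lt: "cmod (p1ev a m n w1 w2) < cmod (p2ev a m n w1 w2)"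
    using \<open>0 < g t\<close> by (simp add: g_def w1_def w2_def)
  then have "p2ev a m n w1 w2 \<noteq> 0" by auto
  then have "pev a m n w1 w2 (- p1ev a m n w1 w2 / p2ev a m n w1 w2) = 0"
    by (simp add: pev_eq_p1ev_p2ev)
  moreover have "cmod (- p1ev a m n w1 w2 / p2ev a m n w1 w2) < 1"
    using lt by (simp add: norm_divide divide_less_eq)
  ultimately show False using zero_free[OF w] by blast
qed

lemma rho_nonneg:
  assumes "\<And>z1 z2 z3. cmod z1 < 1 \<Longrightarrow> cmod z2 < 1 \<Longrightarrow> cmod z3 < 1 \<Longrightarrow> pev a m n z1 z2 z3 \<noteq> 0"
  shows "0 \<le> rho a m n x y"
proof -
  have "cmod (p2ev a m n (cis x) (cis y)) \<le> cmod (p1ev a m n (cis x) (cis y))"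
    by (rule norm_p2ev_le_norm_p1ev[OF assms]) auto
  then have "(cmod (p2ev a m n (cis x) (cis y)))\<^sup>2 / (cmod (p1ev a m n (cis x) (cis y)))\<^sup>2 \<le> 1"
    by (simp add: divide_le_eq_1 power_mono)
  then show ?thesis unfolding rho_eq by linarith
qed

lemma p1ev_1_1_neq_0:
  assumes "pev a m n 1 1 1 = 0" and "\<not> (\<forall>\<zeta>. cmod \<zeta> = 1 \<longrightarrow> pev a m n 1 1 \<zeta> = 0)"
  shows "p1ev a m n 1 1 \<noteq> 0"
proof
  assume p1: "p1ev a m n 1 1 = 0"
  with assms(1) have "p2ev a m n 1 1 = 0" by (simp add: pev_eq_p1ev_p2ev)
  with p1 assms(2) show False by (simp add: pev_eq_p1ev_p2ev)
qed

lemma rho_0_0: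
  assumes "pev a m n 1 1 1 = 0" and "p1ev a m n 1 1 \<noteq> 0"
  shows "rho a m n 0 0 = 0"
proof -
  have "p2ev a m n 1 1 = - p1ev a m n 1 1"
    using assms(1) by (simp add: pev_eq_p1ev_p2ev add_eq_0_iff)
  then show ?thesis using assms(2) by (simp add: rho_eq)
qed

lemma rho_powser2:
  assumes p11: "p1ev a m n 1 1 \<noteq> 0"
  obtains r C where "0 < r" "powser2_conv C r"
    and "\<And>x y. \<bar>x\<bar> \<le> r \<Longrightarrow> \<bar>y\<bar> \<le> r \<Longrightarrow>
      p1ev a m n (cis x) (cis y) \<noteq> 0 \<and> rho a m n x y = powser2_sum C x y"
proof -
  define sq where "sq k = trig_poly_sq_coeffs (\<lambda>i j. a i j k) m n" for k
  have sq: "powser2_conv (sq k) r'" if "0 \<le> r'" for k r'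
    unfolding sq_def using that by (rule powser2_conv_trig_poly_sq_coeffs)
  have sum_sq: "powser2_sum (sq 0) (of_real x) (of_real y) = of_real ((cmod (p1ev a m n (cis x) (cis y)))\<^sup>2)"
    "powser2_sum (sq 1) (of_real x) (of_real y) = of_real ((cmod (p2ev a m n (cis x) (cis y)))\<^sup>2)"
    for x y
    by (simp_all only: sq_def powser2_sum_trig_poly_sq_coeffs p1ev_def p2ev_def)
  have "sq 0 0 0 \<noteq> 0"
    using sum_sq(1)[of 0 0] p11 by (simp add: powser2_sum_0)
  then obtain r where r: "0 < r" "r \<le> 1" and inv: "powser2_conv (powser2_inverse (sq 0)) r"
    and sum_inv: "\<And>x y. norm x \<le> r \<Longrightarrow> norm y \<le> r \<Longrightarrow> powser2_sum (sq 0) x y \<noteq> 0 \<and>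
      powser2_sum (powser2_inverse (sq 0)) x y = inverse (powser2_sum (sq 0) x y)"
    using powser2_inverse[OF sq zero_less_one] by auto
  have sq_r: "powser2_conv (sq k) r" for k using sq r by simp
  define N where "N = (\<lambda>k l. sq 0 k l + (- 1) * sq 1 k l)"
  define F where "F = powser2_mult N (powser2_inverse (sq 0))"
  have N: "powser2_conv N r"
    unfolding N_def using r by (intro powser2_conv_add powser2_conv_scale sq_r) auto
  have F: "powser2_conv F r" unfolding F_def using N inv r by (intro powser2_conv_mult) auto
  show ?thesis
  proof
    show "0 < r" by (fact r(1))
    show "powser2_conv (\<lambda>k l. Re (F k l)) r" using F r by (simp add: powser2_conv_Re)
    fix x y :: real assume xy: "\<bar>x\<bar> \<le> r" "\<bar>y\<bar> \<le> r"
    then have nxy: "norm (of_real x :: complex) \<le> r" "norm (of_real y :: complex) \<le> r" by simp_all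
    define A where "A = (cmod (p1ev a m n (cis x) (cis y)))\<^sup>2"
    define B where "B = (cmod (p2ev a m n (cis x) (cis y)))\<^sup>2"
    have "A \<noteq> 0" using sum_inv[OF nxy] sum_sq(1)[of x y] by (simp add: A_def)
    have "powser2_sum N (of_real x) (of_real y) =
        powser2_sum (sq 0) (of_real x) (of_real y) + (- 1) * powser2_sum (sq 1) (of_real x) (of_real y)"
      unfolding N_def
      by (simp only: powser2_sum_add[OF sq_r powser2_conv_scale[OF sq_r] nxy] powser2_sum_scale[OF sq_r nxy])
    then have "powser2_sum F (of_real x) (of_real y) = of_real ((A - B) / A)"
      using sum_inv[OF nxy] sum_sq[of x y]
      by (simp add: F_def powser2_sum_mult[OF N inv nxy] A_def B_def divide_inverse)
    then show "p1ev a m n (cis x) (cis y) \<noteq> 0 \<and> rho a m n x y = powser2_sum (\<lambda>k l. Re (F k l)) x y"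
      using \<open>A \<noteq> 0\<close> powser2_sum_Re[OF F xy]
      by (auto simp: rho_eq A_def B_def diff_divide_distrib)
  qed
qed

lemma rho_nonneg_powser2:
  assumes zero_free: "\<And>z1 z2 z3. cmod z1 < 1 \<Longrightarrow> cmod z2 < 1 \<Longrightarrow> cmod z3 < 1 \<Longrightarrow> pev a m n z1 z2 z3 \<noteq> 0"
    and sing: "pev a m n 1 1 1 = 0" and not_line: "\<not> (\<forall>\<zeta>. cmod \<zeta> = 1 \<longrightarrow> pev a m n 1 1 \<zeta> = 0)"
  shows "\<exists>C r. nonneg_powser2 C r \<and> (\<forall>x y. \<bar>x\<bar> \<le> r \<longrightarrow> \<bar>y\<bar> \<le> r \<longrightarrow>
      p1ev a m n (cis x) (cis y) \<noteq> 0 \<and> rho a m n x y = powser2_sum C x y)"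
proof -
  have p11: "p1ev a m n 1 1 \<noteq> 0" using sing not_line by (rule p1ev_1_1_neq_0)
  obtain r C where r: "0 < r" and C: "powser2_conv C r" and rho_C:
    "\<And>x y. \<bar>x\<bar> \<le> r \<Longrightarrow> \<bar>y\<bar> \<le> r \<Longrightarrow> p1ev a m n (cis x) (cis y) \<noteq> 0 \<and> rho a m n x y = powser2_sum C x y"
    by (rule rho_powser2[OF p11]) (rule that)
  have "nonneg_powser2 C r"
  proof
    show "0 \<le> powser2_sum C x y" if "\<bar>x\<bar> < r" "\<bar>y\<bar> < r" for x y
      using rho_nonneg[OF zero_free, of x y] rho_C[of x y] that by simp
    show "powser2_sum C 0 0 = 0"
      using rho_0_0[OF sing p11] rho_C[of 0 0] r by simp
  qed (use C r in auto)
  with rho_C show ?thesis by blast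
qed

lemma torus_zero_isolated:
  assumes r: "0 < r"
    and rho_f: "\<And>x y. \<bar>x\<bar> \<le> r \<Longrightarrow> \<bar>y\<bar> \<le> r \<Longrightarrow> p1ev a m n (cis x) (cis y) \<noteq> 0 \<and> rho a m n x y = f x y"
    and iso: "\<exists>\<delta>>0. \<forall>x y. \<bar>x\<bar> < \<delta> \<longrightarrow> \<bar>y\<bar> < \<delta> \<longrightarrow> f x y = 0 \<longrightarrow> x = 0 \<and> y = 0"
    and sing: "pev a m n 1 1 1 = 0"
  shows "\<exists>\<epsilon>>0. \<forall>z1 z2 z3. cmod z1 = 1 \<and> cmod z2 = 1 \<and> cmod z3 = 1 \<and> pev a m n z1 z2 z3 = 0
    \<and> cmod (z1 - 1) < \<epsilon> \<and> cmod (z2 - 1) < \<epsilon> \<and> cmod (z3 - 1) < \<epsilon> \<longrightarrow> z1 = 1 \<and> z2 = 1 \<and> z3 = 1"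
proof -
  obtain \<delta> where "0 < \<delta>" "\<delta> \<le> r"
    and rho_zero: "\<And>x y. \<bar>x\<bar> < \<delta> \<Longrightarrow> \<bar>y\<bar> < \<delta> \<Longrightarrow> rho a m n x y = 0 \<Longrightarrow> x = 0 \<and> y = 0"
    and p1: "\<And>x y. \<bar>x\<bar> < \<delta> \<Longrightarrow> \<bar>y\<bar> < \<delta> \<Longrightarrow> p1ev a m n (cis x) (cis y) \<noteq> 0"
  proof -
    from iso obtain \<delta> where "0 < \<delta>"
      and "\<And>x y. \<bar>x\<bar> < \<delta> \<Longrightarrow> \<bar>y\<bar> < \<delta> \<Longrightarrow> f x y = 0 \<Longrightarrow> x = 0 \<and> y = 0" by blast
    with r rho_f show ?thesis by (intro that[of "min \<delta> r"]) auto
  qed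
  have "continuous (at 1) Arg" by (rule continuous_at_Arg) (simp add: nonpos_Reals_def)
  then obtain \<epsilon> where "0 < \<epsilon>" and Arg_small: "\<And>z. dist z 1 < \<epsilon> \<Longrightarrow> \<bar>Arg z\<bar> < \<delta>"
    using \<open>0 < \<delta>\<close> unfolding continuous_at_eps_delta by (fastforce simp: dist_real_def)
  have "z1 = 1 \<and> z2 = 1 \<and> z3 = 1"
    if z: "cmod z1 = 1" "cmod z2 = 1" "cmod z3 = 1" and zero: "pev a m n z1 z2 z3 = 0"
      and near: "cmod (z1 - 1) < \<epsilon>" "cmod (z2 - 1) < \<epsilon>" for z1 z2 z3
  proof -
    define t1 t2 where "t1 = Arg z1" and "t2 = Arg z2"
    have t: "\<bar>t1\<bar> < \<delta>" "\<bar>t2\<bar> < \<delta>"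
      using Arg_small near by (auto simp: t1_def t2_def dist_norm)
    have "z1 \<noteq> 0" "z2 \<noteq> 0" using z(1,2) by auto
    then have cis: "cis t1 = z1" "cis t2 = z2"
      using z(1,2) by (simp_all add: t1_def t2_def cis_Arg sgn_eq)
    have "p1ev a m n z1 z2 = - z3 * p2ev a m n z1 z2"
      using zero by (simp add: pev_eq_p1ev_p2ev add_eq_0_iff)
    then have "cmod (p1ev a m n z1 z2) = cmod (p2ev a m n z1 z2)"
      using z(3) by (simp add: norm_mult)
    then have "rho a m n t1 t2 = 0"
      using p1[OF t] by (auto simp: rho_eq cis)
    then have z12: "z1 = 1" "z2 = 1" using rho_zero[OF t] cis by auto
    have "p2ev a m n 1 1 = - p1ev a m n 1 1"
      using sing by (simp add: pev_eq_p1ev_p2ev add_eq_0_iff)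
    then have "p1ev a m n 1 1 * (1 - z3) = 0"
      using zero by (simp add: z12 pev_eq_p1ev_p2ev algebra_simps)
    moreover have "p1ev a m n 1 1 \<noteq> 0" using p1[of 0 0] \<open>0 < \<delta>\<close> by simp
    ultimately show ?thesis using z12 by simp
  qed
  with \<open>0 < \<epsilon>\<close> show ?thesis by blast
qed

theorem lemma3p10:
  fixes a :: "nat \<Rightarrow> nat \<Rightarrow> nat \<Rightarrow> complex" and m n :: nat
  defines "p \<equiv> pev a m n" and "pt \<equiv> ptev a m n"
      and "c \<equiv> taylor2 (rho a m n)"
  assumes supp: "\<And>i j k. a i j k \<noteq> 0 \<Longrightarrow> i \<le> m \<and> j \<le> n \<and> k \<le> 1"
    and deg: "(\<exists>j k. a 0 j k \<noteq> 0) \<and> (\<exists>i k. a i 0 k \<noteq> 0) \<and> (\<exists>i j. a i j 0 \<noteq> 0)"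
    and zero_free: "\<And>z1 z2 z3. cmod z1 < 1 \<Longrightarrow> cmod z2 < 1 \<Longrightarrow> cmod z3 < 1 \<Longrightarrow> p z1 z2 z3 \<noteq> 0"
    and coprime: "no_common_factor3 p pt"
    and irred: "irreducible3 p"
    and sing: "p 1 1 1 = 0"
    and not_line: "\<not> (\<forall>\<zeta>. cmod \<zeta> = 1 \<longrightarrow> p 1 1 \<zeta> = 0)"
  shows "(\<exists>r>0. \<forall>t1 t2. \<bar>t1\<bar> < r \<and> \<bar>t2\<bar> < r \<longrightarrow>
            ((\<lambda>(k, l). c k l * t1 ^ k * t2 ^ l) has_sum rho a m n t1 t2) UNIV)
     \<and> (c 0 0 = 0 \<and> c 1 0 = 0 \<and> c 0 1 = 0)
     \<and> (\<forall>t1 t2. c 2 0 * t1^2 + c 1 1 * t1 * t2 + c 0 2 * t2^2 \<ge> 0)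
     \<and> ((\<forall>t1 t2. (t1, t2) \<noteq> (0, 0) \<longrightarrow> c 2 0 * t1^2 + c 1 1 * t1 * t2 + c 0 2 * t2^2 > 0)
          \<longrightarrow> (\<exists>\<epsilon>>0. \<forall>z1 z2 z3. cmod z1 = 1 \<and> cmod z2 = 1 \<and> cmod z3 = 1 \<and> p z1 z2 z3 = 0
                 \<and> cmod (z1 - 1) < \<epsilon> \<and> cmod (z2 - 1) < \<epsilon> \<and> cmod (z3 - 1) < \<epsilon>
                 \<longrightarrow> z1 = 1 \<and> z2 = 1 \<and> z3 = 1))
     \<and> ((\<forall>t1 t2. c 2 0 * t1^2 + c 1 1 * t1 * t2 + c 0 2 * t2^2 = 0)
          \<longrightarrow> c 3 0 = 0 \<and> c 2 1 = 0 \<and> c 1 2 = 0 \<and> c 0 3 = 0)"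
proof -
  \<comment> \<open>Only zero-freeness on the tridisk, the singularity at (1, 1, 1) and the condition on the
    vertical line are needed.\<close>
  from rho_nonneg_powser2[OF zero_free[unfolded p_def] sing[unfolded p_def] not_line[unfolded p_def]]
  obtain C r where nonneg_C: "nonneg_powser2 C r" and rho_C:
    "\<And>x y. \<bar>x\<bar> \<le> r \<Longrightarrow> \<bar>y\<bar> \<le> r \<Longrightarrow> p1ev a m n (cis x) (cis y) \<noteq> 0 \<and> rho a m n x y = powser2_sum C x y"
    by blast
  interpret nonneg_powser2 C r by (fact nonneg_C)
  have c_eq: "c = C"
    by (intro ext) (simp add: c_def taylor2_powser2_sum[OF conv radius_pos] rho_C)
  have expansion: "\<forall>t1 t2. \<bar>t1\<bar> < r \<and> \<bar>t2\<bar> < r \<longrightarrow>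
      ((\<lambda>(k, l). C k l * t1 ^ k * t2 ^ l) has_sum rho a m n t1 t2) UNIV"
    using powser2_conv_has_sum[OF conv] rho_C by (auto simp: powser2_term_def)
  have isolated: "\<exists>\<epsilon>>0. \<forall>z1 z2 z3. cmod z1 = 1 \<and> cmod z2 = 1 \<and> cmod z3 = 1 \<and> p z1 z2 z3 = 0
      \<and> cmod (z1 - 1) < \<epsilon> \<and> cmod (z2 - 1) < \<epsilon> \<and> cmod (z3 - 1) < \<epsilon> \<longrightarrow> z1 = 1 \<and> z2 = 1 \<and> z3 = 1"
    if pd: "\<forall>t1 t2. (t1, t2) \<noteq> (0, 0) \<longrightarrow> C 2 0 * t1^2 + C 1 1 * t1 * t2 + C 0 2 * t2^2 > 0"
  proof -
    have "\<exists>\<delta>>0. \<forall>x y. \<bar>x\<bar> < \<delta> \<longrightarrow> \<bar>y\<bar> < \<delta> \<longrightarrow> powser2_sum C x y = 0 \<longrightarrow> x = 0 \<and> y = 0"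
      by (rule isolated_zero) (use pd in blast)
    from torus_zero_isolated[OF radius_pos rho_C this sing[unfolded p_def]] show ?thesis
      unfolding p_def .
  qed
  show ?thesis
    unfolding c_eq
    using radius_pos expansion coeffs_deg_le_1_eq_0 quadratic_form_nonneg isolated cubic_coeffs_eq_0
    by (intro conjI) blast+
qed

end
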